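(* A weakly semi-symmetric K-contact manifold is Sasakian.
   Context: A contact metric structure $(M,\eta,\xi,\phi,g)$ consists of a contact form $\eta$, its Reeb field $\xi$, a Riemannian metric $g$ and an endomorphism field $\phi$ with $\eta(\xi)=1$, $\phi^2=-\mathrm{Id}+\eta\otimes\xi$, $\phi\xi=0$, $d\eta=2g(\cdot,\phi\cdot)$. It is K-contact if $h=\frac12L_\xi\phi=0$, and Sasakian if $(\nabla_X\phi)Y=g(X,Y)\xi-\eta(Y)X$ for all $X,Y$ (equivalently $R(X,Y)\xi=\eta(Y)X-\eta(X)Y$), where $\nabla$ is the Levi-Civita connection and $R(X,Y)Z=\nabla_X\nabla_YZ-\nabla_Y\nabla_XZ-\nabla_{[X,Y]}Z$. It is weakly semi-symmetric if $R(X,\xi)\cdot R=0$ for all $X$, where $R(X,\xi)$ acts as a derivation on the curvature tensor: $(R(X,\xi)\cdot R)(Y,Z)W=R(X,\xi)R(Y,Z)W-R(R(X,\xi)Y,Z)W-R(Y,R(X,\xi)Z)W-R(Y,Z)R(X,\xi)W$. *)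

theory Defs
  imports "HOL-Analysis.Analysis"
begin

text \<open>Local-coordinate model: the manifold is an open set U in real^'n.
  Vector fields are maps real^'n => real^'n, (1,1)-tensor fields and the metric
  are matrix-valued maps real^'n => real^'n^'n, the 1-form eta is given by its
  component vector (eta(X) = eta x \<bullet> X x).\<close>

definition pd :: "'n::finite \<Rightarrow> (real^'n \<Rightarrow> real) \<Rightarrow> real^'n \<Rightarrow> real" where
  "pd i f x = deriv (\<lambda>t. f (x + t *\<^sub>R axis i 1)) 0"

text \<open>C-infinity: every iterated partial derivative is (Frechet) differentiable on U.\<close>
definition smooth_fun :: "(real^'n::finite) set \<Rightarrow> (real^'n \<Rightarrow> real) \<Rightarrow> bool" where
  "smooth_fun U f \<longleftrightarrow> (\<forall>is :: 'n list. foldr pd is f differentiable_on U)"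

definition smooth_vf :: "(real^'n::finite) set \<Rightarrow> (real^'n \<Rightarrow> real^'n) \<Rightarrow> bool" where
  "smooth_vf U X \<longleftrightarrow> (\<forall>k. smooth_fun U (\<lambda>y. X y $ k))"

definition smooth_tf :: "(real^'n::finite) set \<Rightarrow> (real^'n \<Rightarrow> real^'n^'n) \<Rightarrow> bool" where
  "smooth_tf U A \<longleftrightarrow> (\<forall>i j. smooth_fun U (\<lambda>y. A y $ i $ j))"

definition dirD :: "(real^'n::finite \<Rightarrow> real^'n) \<Rightarrow> (real^'n \<Rightarrow> real) \<Rightarrow> real^'n \<Rightarrow> real" where
  "dirD X f x = (\<Sum>i\<in>UNIV. X x $ i * pd i f x)"

definition vdirD :: "(real^'n::finite \<Rightarrow> real^'n) \<Rightarrow> (real^'n \<Rightarrow> real^'n) \<Rightarrow> real^'n \<Rightarrow> real^'n" where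
  "vdirD X Y x = (\<chi> k. dirD X (\<lambda>y. Y y $ k) x)"

definition lie :: "(real^'n::finite \<Rightarrow> real^'n) \<Rightarrow> (real^'n \<Rightarrow> real^'n) \<Rightarrow> real^'n \<Rightarrow> real^'n" where
  "lie X Y x = vdirD X Y x - vdirD Y X x"

definition gpt :: "(real^'n::finite \<Rightarrow> real^'n^'n) \<Rightarrow> real^'n \<Rightarrow> real^'n \<Rightarrow> real^'n \<Rightarrow> real" where
  "gpt g x u v = u \<bullet> (g x *v v)"

definition christoffel :: "(real^'n::finite \<Rightarrow> real^'n^'n) \<Rightarrow> real^'n \<Rightarrow> 'n \<Rightarrow> 'n \<Rightarrow> 'n \<Rightarrow> real" where
  "christoffel g x k i j = (1/2) * (\<Sum>l\<in>UNIV. matrix_inv (g x) $ k $ l *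
      (pd i (\<lambda>y. g y $ j $ l) x + pd j (\<lambda>y. g y $ i $ l) x - pd l (\<lambda>y. g y $ i $ j) x))"

definition nabla :: "(real^'n::finite \<Rightarrow> real^'n^'n) \<Rightarrow> (real^'n \<Rightarrow> real^'n) \<Rightarrow> (real^'n \<Rightarrow> real^'n) \<Rightarrow> real^'n \<Rightarrow> real^'n" where
  "nabla g X Y x = vdirD X Y x + (\<chi> k. \<Sum>i\<in>UNIV. \<Sum>j\<in>UNIV. christoffel g x k i j * X x $ i * Y x $ j)"

definition curv :: "(real^'n::finite \<Rightarrow> real^'n^'n) \<Rightarrow> (real^'n \<Rightarrow> real^'n) \<Rightarrow> (real^'n \<Rightarrow> real^'n) \<Rightarrow> (real^'n \<Rightarrow> real^'n) \<Rightarrow> real^'n \<Rightarrow> real^'n" where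
  "curv g X Y Z x = nabla g X (nabla g Y Z) x - nabla g Y (nabla g X Z) x - nabla g (lie X Y) Z x"

text \<open>d eta (X,Y) = X(eta Y) - Y(eta X) - eta([X,Y])  (convention without 1/2, so that
  d eta = 2 g(.,phi .) as in the paper)\<close>
definition deta :: "(real^'n::finite \<Rightarrow> real^'n) \<Rightarrow> (real^'n \<Rightarrow> real^'n) \<Rightarrow> (real^'n \<Rightarrow> real^'n) \<Rightarrow> real^'n \<Rightarrow> real" where
  "deta eta X Y x = dirD X (\<lambda>y. eta y \<bullet> Y y) x - dirD Y (\<lambda>y. eta y \<bullet> X y) x - eta x \<bullet> lie X Y x"

text \<open>d eta at a point (it is tensorial), evaluated on constant extensions\<close>
definition deta_pt :: "(real^'n::finite \<Rightarrow> real^'n) \<Rightarrow> real^'n \<Rightarrow> real^'n \<Rightarrow> real^'n \<Rightarrow> real" where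
  "deta_pt eta x u v = deta eta (\<lambda>_. u) (\<lambda>_. v) x"

definition contact_metric_structure ::
  "(real^'n::finite) set \<Rightarrow> (real^'n \<Rightarrow> real^'n) \<Rightarrow> (real^'n \<Rightarrow> real^'n) \<Rightarrow> (real^'n \<Rightarrow> real^'n^'n) \<Rightarrow> (real^'n \<Rightarrow> real^'n^'n) \<Rightarrow> bool" where
  "contact_metric_structure U eta xi phi g \<longleftrightarrow>
     open U \<and> smooth_vf U eta \<and> smooth_vf U xi \<and> smooth_tf U phi \<and> smooth_tf U g \<and>
     \<comment> \<open>g is a Riemannian metric\<close>
     (\<forall>x\<in>U. transpose (g x) = g x \<and> (\<forall>v. v \<noteq> 0 \<longrightarrow> gpt g x v v > 0)) \<and>
     \<comment> \<open>eta is a contact form: eta nonzero and d eta nondegenerate on ker eta\<close>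
     (\<forall>x\<in>U. eta x \<noteq> 0 \<and>
        (\<forall>u. eta x \<bullet> u = 0 \<and> u \<noteq> 0 \<longrightarrow> (\<exists>v. eta x \<bullet> v = 0 \<and> deta_pt eta x u v \<noteq> 0))) \<and>
     \<comment> \<open>xi is the Reeb field\<close>
     (\<forall>x\<in>U. eta x \<bullet> xi x = 1 \<and> (\<forall>v. deta_pt eta x (xi x) v = 0)) \<and>
     \<comment> \<open>phi^2 = -Id + eta (x) xi, phi xi = 0\<close>
     (\<forall>x\<in>U. \<forall>v. phi x *v (phi x *v v) = - v + (eta x \<bullet> v) *\<^sub>R xi x) \<and>
     (\<forall>x\<in>U. phi x *v xi x = 0) \<and>
     \<comment> \<open>compatibility g(phi X, phi Y) = g(X,Y) - eta(X) eta(Y)\<close>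
     (\<forall>x\<in>U. \<forall>u v. gpt g x (phi x *v u) (phi x *v v) = gpt g x u v - (eta x \<bullet> u) * (eta x \<bullet> v)) \<and>
     \<comment> \<open>d eta = 2 g(., phi .)\<close>
     (\<forall>x\<in>U. \<forall>u v. deta_pt eta x u v = 2 * gpt g x u (phi x *v v))"

text \<open>K-contact: h = (1/2) L_xi phi = 0, where (L_xi phi) X = [xi, phi X] - phi [xi, X]\<close>
definition K_contact ::
  "(real^'n::finite) set \<Rightarrow> (real^'n \<Rightarrow> real^'n) \<Rightarrow> (real^'n \<Rightarrow> real^'n) \<Rightarrow> (real^'n \<Rightarrow> real^'n^'n) \<Rightarrow> (real^'n \<Rightarrow> real^'n^'n) \<Rightarrow> bool" where
  "K_contact U eta xi phi g \<longleftrightarrow>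
     (\<forall>X. smooth_vf U X \<longrightarrow> (\<forall>x\<in>U.
        (1/2) *\<^sub>R (lie xi (\<lambda>y. phi y *v X y) x - phi x *v lie xi X x) = 0))"

definition Sasakian ::
  "(real^'n::finite) set \<Rightarrow> (real^'n \<Rightarrow> real^'n) \<Rightarrow> (real^'n \<Rightarrow> real^'n) \<Rightarrow> (real^'n \<Rightarrow> real^'n^'n) \<Rightarrow> (real^'n \<Rightarrow> real^'n^'n) \<Rightarrow> bool" where
  "Sasakian U eta xi phi g \<longleftrightarrow>
     (\<forall>X Y. smooth_vf U X \<longrightarrow> smooth_vf U Y \<longrightarrow> (\<forall>x\<in>U.
        nabla g X (\<lambda>y. phi y *v Y y) x - phi x *v nabla g X Y x
          = gpt g x (X x) (Y x) *\<^sub>R xi x - (eta x \<bullet> Y x) *\<^sub>R X x))"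

definition weakly_semi_symmetric ::
  "(real^'n::finite) set \<Rightarrow> (real^'n \<Rightarrow> real^'n) \<Rightarrow> (real^'n \<Rightarrow> real^'n) \<Rightarrow> (real^'n \<Rightarrow> real^'n^'n) \<Rightarrow> (real^'n \<Rightarrow> real^'n^'n) \<Rightarrow> bool" where
  "weakly_semi_symmetric U eta xi phi g \<longleftrightarrow>
     (\<forall>X Y Z W. smooth_vf U X \<longrightarrow> smooth_vf U Y \<longrightarrow> smooth_vf U Z \<longrightarrow> smooth_vf U W \<longrightarrow>
       (\<forall>x\<in>U.
          curv g X xi (curv g Y Z W) x
          - curv g (curv g X xi Y) Z W x
          - curv g Y (curv g X xi Z) W x
          - curv g Y Z (curv g X xi W) x = 0))"

end

(*
  On a K-contact manifold the Reeb field xi is Killing; together with d eta = 2 g(., phi .)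
  this forces nabla xi = -phi, and differentiating once more gives
  R(X,Y)xi = (nabla_Y phi)X - (nabla_X phi)Y, in particular R(X,xi)xi = X - eta(X)xi.
  Evaluating R(X,xi).R = 0 on (Y,xi,xi) and subtracting the same identity with X and Y
  exchanged, the first Bianchi identity leaves R(X,Y)xi = eta(Y)X - eta(X)Y, i.e.
  (nabla_X phi)Y - (nabla_Y phi)X = eta(X)Y - eta(Y)X.  The form
  g((nabla_X phi)Y, Z) - g(X,Y)eta(Z) + eta(Y)g(X,Z) is therefore symmetric in X, Y and
  skew in Y, Z, hence zero, which is the Sasakian condition.

  All objects live in one chart, so the Riemannian and contact identities are derived from
  the coordinate formulas for nabla, the Lie bracket and R, using the symmetry of second
  partial derivatives of smooth functions.
*)

theory Submission
  imports Defs
begin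

section \<open>Algebraic curvature tensors\<close>

locale algebraic_curvature =
  fixes R :: "'v::real_vector \<Rightarrow> 'v \<Rightarrow> 'v \<Rightarrow> 'v"
  assumes linear_middle: "linear (\<lambda>b. R a b c)"
    and linear_right: "linear (\<lambda>c. R a b c)"
    and antisym: "R b a c = - R a b c"
    and bianchi: "R a b c + R b c a + R c a b = 0"
begin

lemma diff_middle: "R a (b - b') c = R a b c - R a b' c"
  using linear_diff[OF linear_middle] .

lemma diff_right: "R a b (c - c') = R a b c - R a b c'"
  using linear_diff[OF linear_right] .

lemma scale_middle: "R a (r *\<^sub>R b) c = r *\<^sub>R R a b c"
  using linear_scale[OF linear_middle] .

lemma scale_right: "R a b (r *\<^sub>R c) = r *\<^sub>R R a b c"
  using linear_scale[OF linear_right] .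

lemma weak_semisymmetry_expansion:
  assumes "linear \<eta>" and proj: "\<And>a. R a \<xi> \<xi> = a - \<eta> a *\<^sub>R \<xi>"
  shows "R u \<xi> (R v \<xi> \<xi>) - R (R u \<xi> v) \<xi> \<xi> - R v (R u \<xi> \<xi>) \<xi> - R v \<xi> (R u \<xi> \<xi>)
    = \<eta> (R u \<xi> v) *\<^sub>R \<xi> - \<eta> v *\<^sub>R (u - \<eta> u *\<^sub>R \<xi>) - R v u \<xi>
      + (2 * \<eta> u) *\<^sub>R (v - \<eta> v *\<^sub>R \<xi>) - R v \<xi> u"
  unfolding proj scaleR_scaleR[symmetric] scaleR_2
  by (simp add: diff_middle diff_right scale_middle scale_right proj algebra_simps)

lemma R_xi_if_weakly_semisymmetric:
  assumes "linear \<eta>"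
    and proj: "\<And>a. R a \<xi> \<xi> = a - \<eta> a *\<^sub>R \<xi>"
    and eta_R: "\<And>a b. \<eta> (R a b \<xi>) = 0"
    and semisym: "\<And>u v. R u \<xi> (R v \<xi> \<xi>) - R (R u \<xi> v) \<xi> \<xi>
      - R v (R u \<xi> \<xi>) \<xi> - R v \<xi> (R u \<xi> \<xi>) = 0"
  shows "R u v \<xi> = \<eta> v *\<^sub>R u - \<eta> u *\<^sub>R v"
proof -
  define s where "s = R v u \<xi>"
  define X where "X = \<eta> u *\<^sub>R (v - \<eta> v *\<^sub>R \<xi>) - \<eta> v *\<^sub>R (u - \<eta> u *\<^sub>R \<xi>) - s"
  have swap: "R v \<xi> u = R u \<xi> v + s"
    using bianchi[of u \<xi> v] antisym[of \<xi> v u] unfolding s_def by (simp add: algebra_simps)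
  have Ruv: "R u v \<xi> = - s"
    unfolding s_def by (rule antisym)
  have "\<eta> (R u \<xi> v) *\<^sub>R \<xi> - \<eta> v *\<^sub>R (u - \<eta> u *\<^sub>R \<xi>) - s
      + (2 * \<eta> u) *\<^sub>R (v - \<eta> v *\<^sub>R \<xi>) - (R u \<xi> v + s) = 0" (is "?E1 = 0")
    using semisym[of u v] unfolding weak_semisymmetry_expansion[OF assms(1,2)] swap s_def .
  have "\<eta> (R v \<xi> u) *\<^sub>R \<xi> - \<eta> u *\<^sub>R (v - \<eta> v *\<^sub>R \<xi>) - R u v \<xi>
      + (2 * \<eta> v) *\<^sub>R (u - \<eta> u *\<^sub>R \<xi>) - R u \<xi> v = 0"
    using semisym[of v u] unfolding weak_semisymmetry_expansion[OF assms(1,2)] .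
  then have "\<eta> (R u \<xi> v + s) *\<^sub>R \<xi> - \<eta> u *\<^sub>R (v - \<eta> v *\<^sub>R \<xi>) + s
      + (2 * \<eta> v) *\<^sub>R (u - \<eta> u *\<^sub>R \<xi>) - R u \<xi> v = 0" (is "?E2 = 0")
    unfolding swap Ruv diff_minus_eq_add .
  have "\<eta> s = 0"
    unfolding s_def by (rule eta_R)
  \<comment> \<open>by Bianchi, the instances (u,v) and (v,u) of the semisymmetry condition differ by 3X\<close>
  then have "X + X + X = ?E1 - ?E2"
    unfolding X_def scaleR_scaleR[symmetric] scaleR_2 linear_add[OF assms(1)]
    by (simp add: algebra_simps)
  also have "\<dots> = 0"
    using \<open>?E1 = 0\<close> \<open>?E2 = 0\<close> by simp
  finally have "X = 0"
    using scaleR_add_left[of 2 1 X] scaleR_2[of X] by simp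
  then show ?thesis
    using antisym[of v u \<xi>] unfolding X_def s_def by (simp add: algebra_simps)
qed

end

lemma ternary_sym_skew_eq_0:
  fixes C :: "'a \<Rightarrow> 'a \<Rightarrow> 'a \<Rightarrow> real"
  assumes sym: "\<And>a b c. C a b c = C b a c" and skew: "\<And>a b c. C a b c = - C a c b"
  shows "C a b c = 0"
proof -
  have "C a b c = - C c a b"
    using skew[of a b c] sym[of a c b] by simp
  also have "\<dots> = C b c a"
    using skew[of c a b] sym[of c b a] by simp
  also have "\<dots> = - C a b c"
    using skew[of b c a] sym[of b a c] by simp
  finally show ?thesis by simp
qed

lemma skew_eq_if_alternation:
  fixes D :: "'v::real_vector \<Rightarrow> 'v \<Rightarrow> 'v"
  assumes alternation: "\<And>u v. D u v - D v u = \<eta> u *\<^sub>R v - \<eta> v *\<^sub>R u"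
    and skew: "\<And>u v w. G (D u v) w + G v (D u w) = 0"
    and G_sym: "\<And>a b. G a b = G b a"
    and G_linear: "\<And>b. linear (\<lambda>a. G a b)"
    and G_nondegenerate: "\<And>a. (\<And>w. G a w = 0) \<Longrightarrow> a = 0"
    and G_xi: "\<And>w. G \<xi> w = \<eta> w"
  shows "D u v = G u v *\<^sub>R \<xi> - \<eta> v *\<^sub>R u"
proof -
  note G_add = linear_add[OF G_linear] and G_diff = linear_diff[OF G_linear]
    and G_scale = linear_scale[OF G_linear]
  define C where "C a b c = G (D a b) c - G a b * \<eta> c + \<eta> b * G a c" for a b c
  have "C a b c = C b a c" for a b c
  proof -
    have "G (D a b) c - G (D b a) c = G (D a b - D b a) c"
      by (simp add: G_diff)
    also have "\<dots> = \<eta> a * G b c - \<eta> b * G a c"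
      unfolding alternation by (simp add: G_diff G_scale)
    finally show ?thesis
      unfolding C_def using G_sym[of a b] by (simp add: algebra_simps)
  qed
  moreover have "C a b c = - C a c b" for a b c
    unfolding C_def using skew[of a b c] G_sym[of b "D a c"] G_sym[of a b] G_sym[of a c]
    by (simp add: algebra_simps)
  ultimately have "C u v w = 0" for w
    by (rule ternary_sym_skew_eq_0)
  then have "G (D u v - (G u v *\<^sub>R \<xi> - \<eta> v *\<^sub>R u)) w = 0" for w
    unfolding C_def by (simp add: G_add G_diff G_scale G_xi algebra_simps)
  then have "D u v - (G u v *\<^sub>R \<xi> - \<eta> v *\<^sub>R u) = 0"
    by (rule G_nondegenerate)
  then show ?thesis
    by simp
qed

section \<open>Partial derivatives\<close>

lemma has_real_derivative_along_line:
  fixes f :: "real^'n::finite \<Rightarrow> real"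
  assumes "(f has_derivative f') (at (x + t *\<^sub>R v))"
  shows "((\<lambda>s. f (x + s *\<^sub>R v)) has_real_derivative f' v) (at t)"
proof -
  have "((\<lambda>s::real. x + s *\<^sub>R v) has_derivative (\<lambda>s. s *\<^sub>R v)) (at t)"
    by (auto intro!: derivative_eq_intros)
  then have "((\<lambda>s. f (x + s *\<^sub>R v)) has_derivative (\<lambda>s. f' (s *\<^sub>R v))) (at t)"
    using diff_chain_at[of _ _ t f f'] assms by (simp add: o_def)
  moreover have "(\<lambda>s. f' (s *\<^sub>R v)) = (\<lambda>s. f' v * s)"
    using linear_scale[OF has_derivative_linear[OF assms]] by (auto simp: mult.commute)
  ultimately show ?thesis
    by (simp add: has_field_derivative_def)
qed

lemma pd_has_derivative:
  fixes f :: "real^'n::finite \<Rightarrow> real"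
  assumes "(f has_derivative f') (at x)"
  shows "pd i f x = f' (axis i 1)"
  unfolding pd_def using assms by (intro DERIV_imp_deriv has_real_derivative_along_line) simp

lemma pd_frechet_derivative:
  fixes f :: "real^'n::finite \<Rightarrow> real"
  assumes "f differentiable (at x)"
  shows "pd i f x = frechet_derivative f (at x) (axis i 1)"
  using assms by (simp add: pd_has_derivative frechet_derivative_works)

lemma has_real_derivative_pd_along_axis:
  fixes f :: "real^'n::finite \<Rightarrow> real"
  assumes "f differentiable (at (x + t *\<^sub>R axis i 1))"
  shows "((\<lambda>s. f (x + s *\<^sub>R axis i 1)) has_real_derivative pd i f (x + t *\<^sub>R axis i 1)) (at t)"
  using assms
  by (simp add: pd_frechet_derivative has_real_derivative_along_line frechet_derivative_works)

lemma pd_const [simp]: "pd i (\<lambda>y. c) x = 0"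
  by (rule pd_has_derivative[of _ "\<lambda>_. 0", simplified]) (rule has_derivative_const)

lemma pd_add:
  fixes f h :: "real^'n::finite \<Rightarrow> real"
  assumes "f differentiable (at x)" "h differentiable (at x)"
  shows "pd i (\<lambda>y. f y + h y) x = pd i f x + pd i h x"
  using has_derivative_add[OF assms[unfolded frechet_derivative_works]] assms
  by (simp add: pd_has_derivative pd_frechet_derivative)

lemma pd_mult:
  fixes f h :: "real^'n::finite \<Rightarrow> real"
  assumes "f differentiable (at x)" "h differentiable (at x)"
  shows "pd i (\<lambda>y. f y * h y) x = pd i f x * h x + f x * pd i h x"
  using has_derivative_mult[OF assms[unfolded frechet_derivative_works]] assms
  by (simp add: pd_has_derivative pd_frechet_derivative)

lemma pd_diff:
  fixes f h :: "real^'n::finite \<Rightarrow> real"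
  assumes "f differentiable (at x)" "h differentiable (at x)"
  shows "pd i (\<lambda>y. f y - h y) x = pd i f x - pd i h x"
  using has_derivative_diff[OF assms[unfolded frechet_derivative_works]] assms
  by (simp add: pd_has_derivative pd_frechet_derivative)

lemma pd_sum:
  fixes f :: "'a \<Rightarrow> real^'n::finite \<Rightarrow> real"
  assumes "finite S" "\<And>a. a \<in> S \<Longrightarrow> f a differentiable (at x)"
  shows "pd i (\<lambda>y. \<Sum>a\<in>S. f a y) x = (\<Sum>a\<in>S. pd i (f a) x)"
proof -
  have "((\<lambda>y. \<Sum>a\<in>S. f a y) has_derivative (\<lambda>h. \<Sum>a\<in>S. frechet_derivative (f a) (at x) h)) (at x)"
    using assms(2) by (intro has_derivative_sum) (simp add: frechet_derivative_works)
  then show ?thesis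
    using assms(2) by (simp add: pd_has_derivative pd_frechet_derivative)
qed

lemma pd_cong:
  fixes f h :: "real^'n::finite \<Rightarrow> real"
  assumes "open U" "x \<in> U" "\<And>y. y \<in> U \<Longrightarrow> f y = h y"
  shows "pd i f x = pd i h x"
proof -
  have "open ((\<lambda>t::real. x + t *\<^sub>R axis i 1) -` U)"
    using assms(1) by (intro continuous_open_vimage continuous_intros)
  then have "eventually (\<lambda>t::real. x + t *\<^sub>R axis i 1 \<in> U) (nhds 0)"
    using assms(2) unfolding eventually_nhds by force
  then show ?thesis
    unfolding pd_def by (rule deriv_cong_ev[OF eventually_mono refl]) (use assms(3) in auto)
qed

lemma foldr_pd_cong:
  fixes f h :: "real^'n::finite \<Rightarrow> real"
  assumes "open U" "\<And>y. y \<in> U \<Longrightarrow> f y = h y" "y \<in> U"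
  shows "foldr pd is f y = foldr pd is h y"
  using assms(3)
proof (induction "is" arbitrary: y)
  case Nil
  then show ?case using assms(2) by simp
next
  case (Cons j js)
  then show ?case using pd_cong[OF assms(1) Cons.prems, of "foldr pd js f" "foldr pd js h"] by simp
qed

lemma differentiable_on_cong:
  "(\<And>y. y \<in> U \<Longrightarrow> f y = h y) \<Longrightarrow> f differentiable_on U \<Longrightarrow> h differentiable_on U"
  unfolding differentiable_on_def using differentiable_transform_within[of f _ U 1 h] by auto

section \<open>Smooth functions\<close>

lemma foldr_pd_const: "foldr pd is (\<lambda>y. c) = (\<lambda>y. if is = [] then c else 0)"
  by (induction "is") auto

lemma smooth_const [simp]: "smooth_fun U (\<lambda>y. c)"
  unfolding smooth_fun_def foldr_pd_const by auto

lemma smooth_differentiable_on: "smooth_fun U f \<Longrightarrow> f differentiable_on U"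
  unfolding smooth_fun_def by (metis foldr.simps(1) id_apply)

lemma smooth_differentiable_at: "open U \<Longrightarrow> smooth_fun U f \<Longrightarrow> x \<in> U \<Longrightarrow> f differentiable (at x)"
  using smooth_differentiable_on differentiable_on_eq_differentiable_at by blast

lemma smooth_pd: "smooth_fun U f \<Longrightarrow> smooth_fun U (pd i f)"
  unfolding smooth_fun_def
proof
  fix "is"
  assume "\<forall>is. foldr pd is f differentiable_on U"
  then have "foldr pd (is @ [i]) f differentiable_on U" by blast
  then show "foldr pd is (pd i f) differentiable_on U" by simp
qed

text \<open>A derivative of a function in this closure agrees on U with a function in the closure;
  induction on the list of derivatives then shows that the closure contains only smooth functions.\<close>

inductive_set smooth_closure :: "(real^'n::finite) set \<Rightarrow> (real^'n \<Rightarrow> real) set" for U where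
  smooth: "smooth_fun U f \<Longrightarrow> f \<in> smooth_closure U"
| add: "f \<in> smooth_closure U \<Longrightarrow> h \<in> smooth_closure U \<Longrightarrow> (\<lambda>y. f y + h y) \<in> smooth_closure U"
| mult: "f \<in> smooth_closure U \<Longrightarrow> h \<in> smooth_closure U \<Longrightarrow> (\<lambda>y. f y * h y) \<in> smooth_closure U"
| inverse: "f \<in> smooth_closure U \<Longrightarrow> (\<And>y. y \<in> U \<Longrightarrow> f y \<noteq> 0) \<Longrightarrow>
    (\<lambda>y. inverse (f y)) \<in> smooth_closure U"
| cong: "f \<in> smooth_closure U \<Longrightarrow> (\<And>y. y \<in> U \<Longrightarrow> h y = f y) \<Longrightarrow> h \<in> smooth_closure U"

lemma smooth_closure_differentiable_on:
  assumes "open U" "f \<in> smooth_closure U"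
  shows "f differentiable_on U"
  using assms(2)
proof induction
  case (smooth f)
  then show ?case by (rule smooth_differentiable_on)
next
  case (add f h)
  then show ?case by (auto simp: differentiable_on_def)
next
  case (mult f h)
  then show ?case using assms(1) by (auto simp: differentiable_on_eq_differentiable_at)
next
  case (inverse f)
  then show ?case using assms(1) by (auto simp: differentiable_on_eq_differentiable_at)
next
  case (cong f h)
  then show ?case using differentiable_on_cong[of U f h] by auto
qed

lemma pd_inverse:
  fixes f :: "real^'n::finite \<Rightarrow> real"
  assumes "f differentiable (at x)" "f x \<noteq> 0"
  shows "pd i (\<lambda>y. inverse (f y)) x = - (pd i f x * (inverse (f x) * inverse (f x)))"
  using Deriv.has_derivative_inverse[OF assms(2) assms(1)[unfolded frechet_derivative_works]] assms(1)
  by (simp add: pd_has_derivative pd_frechet_derivative algebra_simps)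

lemma smooth_closure_pd:
  assumes "open U" "f \<in> smooth_closure U"
  shows "\<exists>h\<in>smooth_closure U. \<forall>y\<in>U. pd i f y = h y"
  using assms(2)
proof induction
  case (smooth f)
  then show ?case by (intro bexI[of _ "pd i f"] smooth_closure.smooth smooth_pd) auto
next
  case (add f h)
  then obtain f' h' where "f' \<in> smooth_closure U" "h' \<in> smooth_closure U"
    "\<forall>y\<in>U. pd i f y = f' y" "\<forall>y\<in>U. pd i h y = h' y" by blast
  moreover have "\<forall>y\<in>U. pd i (\<lambda>y. f y + h y) y = pd i f y + pd i h y"
    using add.hyps assms(1) smooth_closure_differentiable_on[OF assms(1)]
    by (auto simp: differentiable_on_eq_differentiable_at intro!: pd_add)
  ultimately show ?case by (intro bexI[of _ "\<lambda>y. f' y + h' y"] smooth_closure.add) auto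
next
  case (mult f h)
  then obtain f' h' where "f' \<in> smooth_closure U" "h' \<in> smooth_closure U"
    "\<forall>y\<in>U. pd i f y = f' y" "\<forall>y\<in>U. pd i h y = h' y" by blast
  moreover have "\<forall>y\<in>U. pd i (\<lambda>y. f y * h y) y = pd i f y * h y + f y * pd i h y"
    using mult.hyps assms(1) smooth_closure_differentiable_on[OF assms(1)]
    by (auto simp: differentiable_on_eq_differentiable_at intro!: pd_mult)
  ultimately show ?case
    using mult.hyps
    by (intro bexI[of _ "\<lambda>y. f' y * h y + f y * h' y"] smooth_closure.add smooth_closure.mult) auto
next
  case (inverse f)
  then obtain f' where f': "f' \<in> smooth_closure U" "\<forall>y\<in>U. pd i f y = f' y" by blast
  have "\<forall>y\<in>U. pd i (\<lambda>y. inverse (f y)) y = (-1) * (f' y * (inverse (f y) * inverse (f y)))"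
    using inverse.hyps f'(2) assms(1) smooth_closure_differentiable_on[OF assms(1)]
    by (auto simp: differentiable_on_eq_differentiable_at pd_inverse)
  then show ?case
    using inverse.hyps f'(1)
    by (intro bexI[of _ "\<lambda>y. (-1) * (f' y * (inverse (f y) * inverse (f y)))"]
        smooth_closure.mult smooth_closure.inverse smooth_closure.smooth[OF smooth_const]) auto
next
  case (cong f h)
  then obtain f' where "f' \<in> smooth_closure U" "\<forall>y\<in>U. pd i f y = f' y" by blast
  moreover have "\<forall>y\<in>U. pd i h y = pd i f y" using pd_cong[OF assms(1), of _ h f] cong.hyps by auto
  ultimately show ?case by auto
qed

lemma smooth_closure_eq: "open U \<Longrightarrow> f \<in> smooth_closure U \<longleftrightarrow> smooth_fun U f"
proof
  assume "open U" "f \<in> smooth_closure U"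
  have "foldr pd is f differentiable_on U" for "is"
    using \<open>f \<in> smooth_closure U\<close>
  proof (induction "is" arbitrary: f rule: rev_induct)
    case Nil
    then show ?case using smooth_closure_differentiable_on[OF \<open>open U\<close>] by simp
  next
    case (snoc i js)
    obtain h where h: "h \<in> smooth_closure U" "\<forall>y\<in>U. pd i f y = h y"
      using smooth_closure_pd[OF \<open>open U\<close> snoc.prems] by blast
    have "\<And>y. y \<in> U \<Longrightarrow> foldr pd js h y = foldr pd js (pd i f) y"
      using foldr_pd_cong[OF \<open>open U\<close>, of h "pd i f"] h(2) by auto
    then have "foldr pd js (pd i f) differentiable_on U"
      using differentiable_on_cong snoc.IH[OF h(1)] by blast
    then show ?case by simp
  qed
  then show "smooth_fun U f" unfolding smooth_fun_def by blast
qed (rule smooth_closure.smooth)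

lemma smooth_add: "open U \<Longrightarrow> smooth_fun U f \<Longrightarrow> smooth_fun U h \<Longrightarrow> smooth_fun U (\<lambda>y. f y + h y)"
  by (simp add: smooth_closure_eq[symmetric] smooth_closure.add)

lemma smooth_mult: "open U \<Longrightarrow> smooth_fun U f \<Longrightarrow> smooth_fun U h \<Longrightarrow> smooth_fun U (\<lambda>y. f y * h y)"
  by (simp add: smooth_closure_eq[symmetric] smooth_closure.mult)

lemma smooth_inverse:
  "open U \<Longrightarrow> smooth_fun U f \<Longrightarrow> (\<And>y. y \<in> U \<Longrightarrow> f y \<noteq> 0) \<Longrightarrow> smooth_fun U (\<lambda>y. inverse (f y))"
  by (simp add: smooth_closure_eq[symmetric] smooth_closure.inverse)

lemma smooth_cong: "open U \<Longrightarrow> smooth_fun U f \<Longrightarrow> (\<And>y. y \<in> U \<Longrightarrow> h y = f y) \<Longrightarrow> smooth_fun U h"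
  by (simp add: smooth_closure_eq[symmetric]) (metis smooth_closure.cong)

lemma smooth_diff: "open U \<Longrightarrow> smooth_fun U f \<Longrightarrow> smooth_fun U h \<Longrightarrow> smooth_fun U (\<lambda>y. f y - h y)"
  using smooth_add[of U f "\<lambda>y. (-1) * h y"] smooth_mult[of U "\<lambda>_. -1" h] by simp

lemma smooth_if: "smooth_fun U f \<Longrightarrow> smooth_fun U h \<Longrightarrow> smooth_fun U (\<lambda>y. if P then f y else h y)"
  by (cases P) auto

lemma smooth_sum:
  assumes "open U" "finite S" "\<And>a. a \<in> S \<Longrightarrow> smooth_fun U (f a)"
  shows "smooth_fun U (\<lambda>y. \<Sum>a\<in>S. f a y :: real)"
  using assms(2,3) by (induction S rule: finite_induct) (auto intro: smooth_add[OF assms(1)])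

lemma smooth_prod:
  assumes "open U" "finite S" "\<And>a. a \<in> S \<Longrightarrow> smooth_fun U (f a)"
  shows "smooth_fun U (\<lambda>y. \<Prod>a\<in>S. f a y :: real)"
  using assms(2,3) by (induction S rule: finite_induct) (auto intro: smooth_mult[OF assms(1)])

lemma smooth_det:
  assumes "open U" "\<And>i j. smooth_fun U (\<lambda>y. A y $ i $ j)"
  shows "smooth_fun U (\<lambda>y. det (A y :: real^'n::finite^'n))"
  unfolding det_def
  by (intro smooth_sum smooth_mult smooth_prod assms finite_permutations finite_class.finite_UNIV
      smooth_const)

section \<open>Symmetry of second partial derivatives\<close>

lemma second_difference_mean_value:
  fixes f :: "real^'n::finite \<Rightarrow> real"
  assumes "open U" "f differentiable_on U" "0 < h"
    and segment: "\<And>t s. 0 \<le> t \<Longrightarrow> t \<le> h \<Longrightarrow> 0 \<le> s \<Longrightarrow> s \<le> h \<Longrightarrow>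
      x + t *\<^sub>R axis a 1 + s *\<^sub>R axis b 1 \<in> U"
  obtains z where "0 < z" "z < h"
    "f (x + h *\<^sub>R axis a 1 + h *\<^sub>R axis b 1) - f (x + h *\<^sub>R axis a 1) - f (x + h *\<^sub>R axis b 1) + f x
       = h * (pd a f (x + h *\<^sub>R axis b 1 + z *\<^sub>R axis a 1) - pd a f (x + z *\<^sub>R axis a 1))"
proof -
  define ea eb where "ea = (axis a 1 :: real^'n)" and "eb = (axis b 1 :: real^'n)"
  define \<phi> where "\<phi> t = f (x + h *\<^sub>R eb + t *\<^sub>R ea) - f (x + t *\<^sub>R ea)" for t
  have der: "DERIV \<phi> t :> pd a f (x + h *\<^sub>R eb + t *\<^sub>R ea) - pd a f (x + t *\<^sub>R ea)"
    if "0 \<le> t" "t \<le> h" for t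
  proof -
    have "x + h *\<^sub>R eb + t *\<^sub>R ea \<in> U" "x + t *\<^sub>R ea \<in> U"
      using segment[of t h] segment[of t 0] that assms(3) by (simp_all add: ea_def eb_def algebra_simps)
    then have "f differentiable (at (x + h *\<^sub>R eb + t *\<^sub>R ea))" "f differentiable (at (x + t *\<^sub>R ea))"
      using assms(1,2) by (auto simp: differentiable_on_eq_differentiable_at)
    then show ?thesis
      unfolding \<phi>_def[abs_def] ea_def by (intro DERIV_diff has_real_derivative_pd_along_axis)
  qed
  obtain z where "0 < z" "z < h"
    "\<phi> h - \<phi> 0 = (h - 0) * (pd a f (x + h *\<^sub>R eb + z *\<^sub>R ea) - pd a f (x + z *\<^sub>R ea))"
    using MVT2[OF assms(3) der] by blast
  moreover have "\<phi> h - \<phi> 0 =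
      f (x + h *\<^sub>R ea + h *\<^sub>R eb) - f (x + h *\<^sub>R ea) - f (x + h *\<^sub>R eb) + f x"
    by (simp add: \<phi>_def algebra_simps)
  ultimately show ?thesis
    using that unfolding ea_def eb_def by auto
qed

lemma has_derivative_two_point_estimate:
  fixes G :: "'a::real_normed_vector \<Rightarrow> real"
  assumes "(G has_derivative G') (at x)" "0 < e"
  obtains d where "0 < d" "\<And>p q. norm (p - x) < d \<Longrightarrow> norm (q - x) < d \<Longrightarrow>
    \<bar>G p - G q - G' (p - q)\<bar> \<le> e * (norm (p - x) + norm (q - x))"
proof -
  obtain d where "0 < d"
    and d: "\<And>y. norm (y - x) < d \<Longrightarrow> norm (G y - G x - G' (y - x)) \<le> e * norm (y - x)"
    using assms unfolding has_derivative_at_alt by blast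
  moreover have "\<bar>G p - G q - G' (p - q)\<bar> \<le> e * (norm (p - x) + norm (q - x))"
    if "norm (p - x) < d" "norm (q - x) < d" for p q
  proof -
    have "G' (p - q) = G' (p - x) - G' (q - x)"
      using linear_diff[OF has_derivative_linear[OF assms(1)], of "p - x" "q - x"] by simp
    then have "\<bar>G p - G q - G' (p - q)\<bar> = \<bar>(G p - G x - G' (p - x)) - (G q - G x - G' (q - x))\<bar>"
      by simp
    also have "\<dots> \<le> \<bar>G p - G x - G' (p - x)\<bar> + \<bar>G q - G x - G' (q - x)\<bar>"
      by (rule abs_triangle_ineq4)
    also have "\<dots> \<le> e * norm (p - x) + e * norm (q - x)"
      using d[OF that(1)] d[OF that(2)] by simp
    finally show ?thesis
      by (simp add: distrib_left)
  qed
  ultimately show ?thesis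
    using that by blast
qed

lemma add_axes_mem_ball:
  fixes x :: "real^'n::finite"
  assumes "0 \<le> t" "t < r/2" "0 \<le> s" "s < r/2"
  shows "x + t *\<^sub>R axis a 1 + s *\<^sub>R axis b 1 \<in> ball x r"
proof -
  have "norm (t *\<^sub>R axis a 1 + s *\<^sub>R axis b 1 :: real^'n) < r"
    using assms norm_triangle_ineq[of "t *\<^sub>R axis a 1" "s *\<^sub>R axis b 1 :: real^'n"] by simp
  then show ?thesis
    unfolding mem_ball dist_norm add.assoc by (subst norm_minus_commute) simp
qed

lemma second_difference_quotient_tendsto:
  fixes f :: "real^'n::finite \<Rightarrow> real"
  assumes "open U" "x \<in> U" "f differentiable_on U" "pd a f differentiable (at x)"
  shows "((\<lambda>h. (f (x + h *\<^sub>R axis a 1 + h *\<^sub>R axis b 1) - f (x + h *\<^sub>R axis a 1)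
              - f (x + h *\<^sub>R axis b 1) + f x) / h\<^sup>2) \<longlongrightarrow> pd b (pd a f) x) (at_right 0)"
    (is "(?Q \<longlongrightarrow> _) _")
proof (rule tendstoI)
  fix e :: real
  assume "0 < e"
  obtain G' where G': "(pd a f has_derivative G') (at x)"
    using assms(4) unfolding differentiable_def by blast
  have "0 < e/6" using \<open>0 < e\<close> by simp
  then obtain d where "0 < d" and d: "\<And>p q. norm (p - x) < d \<Longrightarrow> norm (q - x) < d \<Longrightarrow>
      \<bar>pd a f p - pd a f q - G' (p - q)\<bar> \<le> e/6 * (norm (p - x) + norm (q - x))"
    using has_derivative_two_point_estimate[OF G'] by blast
  obtain r where "0 < r" "ball x r \<subseteq> U"
    using assms(1,2) open_contains_ball by blast
  have "dist (?Q h) (pd b (pd a f) x) < e" if "0 < h" "h < min (d/2) (r/2)" for h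
  proof -
    have "x + t *\<^sub>R axis a 1 + s *\<^sub>R axis b 1 \<in> U" if "0 \<le> t" "t \<le> h" "0 \<le> s" "s \<le> h" for t s
      using add_axes_mem_ball[of t r s x a b] that \<open>h < min (d/2) (r/2)\<close> \<open>ball x r \<subseteq> U\<close> by auto
    then obtain z where z: "0 < z" "z < h"
      "f (x + h *\<^sub>R axis a 1 + h *\<^sub>R axis b 1) - f (x + h *\<^sub>R axis a 1) - f (x + h *\<^sub>R axis b 1) + f x
         = h * (pd a f (x + h *\<^sub>R axis b 1 + z *\<^sub>R axis a 1) - pd a f (x + z *\<^sub>R axis a 1))"
      using second_difference_mean_value[OF assms(1,3) \<open>0 < h\<close>] by blast
    let ?p = "x + h *\<^sub>R axis b 1 + z *\<^sub>R axis a 1" and ?q = "x + z *\<^sub>R axis a 1"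
    have np: "norm (?p - x) \<le> h + z" and nq: "norm (?q - x) = z"
      using z norm_triangle_ineq[of "h *\<^sub>R axis b 1" "z *\<^sub>R axis a 1 :: real^'n"] by simp_all
    have "G' (?p - ?q) = h * pd b (pd a f) x"
      using G' by (simp add: pd_has_derivative linear_scale[OF has_derivative_linear])
    moreover have "norm (?p - x) < d" "norm (?q - x) < d"
      using np nq z \<open>h < min (d/2) (r/2)\<close> by linarith+
    then have "\<bar>pd a f ?p - pd a f ?q - G' (?p - ?q)\<bar> \<le> e/6 * (norm (?p - x) + norm (?q - x))"
      by (rule d)
    ultimately have "\<bar>pd a f ?p - pd a f ?q - h * pd b (pd a f) x\<bar>
        \<le> e/6 * (norm (?p - x) + norm (?q - x))"
      by simp
    also have "\<dots> \<le> e/6 * ((h + z) + z)"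
      using np nq \<open>0 < e\<close> by (intro mult_left_mono) auto
    also have "\<dots> < e * h"
      using z \<open>0 < e\<close> by simp
    finally have "\<bar>pd a f ?p - pd a f ?q - h * pd b (pd a f) x\<bar> / h < e"
      using \<open>0 < h\<close> by (simp add: pos_divide_less_eq)
    moreover have "(h * (pd a f ?p - pd a f ?q)) / h\<^sup>2 - pd b (pd a f) x
        = (pd a f ?p - pd a f ?q - h * pd b (pd a f) x) / h"
      using \<open>0 < h\<close> by (simp add: field_simps power2_eq_square)
    then have "dist (?Q h) (pd b (pd a f) x) = \<bar>pd a f ?p - pd a f ?q - h * pd b (pd a f) x\<bar> / h"
      using z(3) \<open>0 < h\<close> by (simp add: dist_real_def)
    ultimately show ?thesis
      by simp
  qed
  then show "\<forall>\<^sub>F h in at_right 0. dist (?Q h) (pd b (pd a f) x) < e"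
    unfolding eventually_at_right_field using \<open>0 < d\<close> \<open>0 < r\<close>
    by (intro exI[of _ "min (d/2) (r/2)"]) auto
qed

text \<open>Schwarz: the second difference is symmetric in the two directions.\<close>

lemma pd_commute:
  fixes f :: "real^'n::finite \<Rightarrow> real"
  assumes "open U" "x \<in> U" "f differentiable_on U"
    and "pd a f differentiable (at x)" "pd b f differentiable (at x)"
  shows "pd b (pd a f) x = pd a (pd b f) x"
proof (rule tendsto_unique[OF trivial_limit_at_right_real])
  show "((\<lambda>h. (f (x + h *\<^sub>R axis a 1 + h *\<^sub>R axis b 1) - f (x + h *\<^sub>R axis a 1)
      - f (x + h *\<^sub>R axis b 1) + f x) / h\<^sup>2) \<longlongrightarrow> pd b (pd a f) x) (at_right 0)"
    using assms(1-4) by (rule second_difference_quotient_tendsto)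
  have "((\<lambda>h. (f (x + h *\<^sub>R axis b 1 + h *\<^sub>R axis a 1) - f (x + h *\<^sub>R axis b 1)
      - f (x + h *\<^sub>R axis a 1) + f x) / h\<^sup>2) \<longlongrightarrow> pd a (pd b f) x) (at_right 0)"
    using assms(1-3,5) by (rule second_difference_quotient_tendsto)
  then show "((\<lambda>h. (f (x + h *\<^sub>R axis a 1 + h *\<^sub>R axis b 1) - f (x + h *\<^sub>R axis a 1)
      - f (x + h *\<^sub>R axis b 1) + f x) / h\<^sup>2) \<longlongrightarrow> pd a (pd b f) x) (at_right 0)"
    by (simp add: algebra_simps)
qed

lemma smooth_pd_commute:
  "open U \<Longrightarrow> x \<in> U \<Longrightarrow> smooth_fun U f \<Longrightarrow> pd b (pd a f) x = pd a (pd b f) x"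
  by (intro pd_commute[of U]) (auto intro: smooth_differentiable_on smooth_differentiable_at smooth_pd)

section \<open>Vector fields on an open set\<close>

definition jacobian :: "(real^'n::finite \<Rightarrow> real^'n) \<Rightarrow> real^'n \<Rightarrow> real^'n^'n" where
  "jacobian Y y = (\<chi> k i. pd i (\<lambda>z. Y z $ k) y)"

definition grad :: "(real^'n::finite \<Rightarrow> real) \<Rightarrow> real^'n \<Rightarrow> real^'n" where
  "grad f y = (\<chi> j. pd j f y)"

definition mat_dirD ::
  "(real^'n::finite \<Rightarrow> real^'n) \<Rightarrow> (real^'n \<Rightarrow> real^'n^'n) \<Rightarrow> real^'n \<Rightarrow> real^'n^'n" where
  "mat_dirD X M x = (\<chi> a b. dirD X (\<lambda>y. M y $ a $ b) x)"

lemma vdirD_eq_jacobian: "vdirD X Y y = jacobian Y y *v X y"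
  by (simp add: vdirD_def dirD_def jacobian_def matrix_vector_mult_def mult.commute)

lemma lie_eq_jacobian: "lie X Y y = jacobian Y y *v X y - jacobian X y *v Y y"
  by (simp add: lie_def vdirD_eq_jacobian)

lemma dirD_eq_inner_grad: "dirD X f x = X x \<bullet> grad f x"
  by (simp add: dirD_def grad_def inner_vec_def)

lemma dirD_const [simp]: "dirD X (\<lambda>y. c) x = 0"
  unfolding dirD_def by simp

lemma vdirD_const [simp]: "vdirD X (\<lambda>y. c) x = 0"
  unfolding vdirD_def by (simp add: vec_eq_iff)

lemma jacobian_const [simp]: "jacobian (\<lambda>y. c) x = 0"
  unfolding jacobian_def by (simp add: vec_eq_iff)

lemma lie_const [simp]: "lie (\<lambda>y. u) (\<lambda>y. v) x = 0"
  unfolding lie_def by simp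

lemma dirD_add:
  "f differentiable (at x) \<Longrightarrow> h differentiable (at x) \<Longrightarrow>
    dirD X (\<lambda>y. f y + h y) x = dirD X f x + dirD X h x"
  unfolding dirD_def by (simp add: pd_add sum.distrib algebra_simps)

lemma dirD_diff:
  "f differentiable (at x) \<Longrightarrow> h differentiable (at x) \<Longrightarrow>
    dirD X (\<lambda>y. f y - h y) x = dirD X f x - dirD X h x"
  unfolding dirD_def by (simp add: pd_diff sum_subtractf algebra_simps)

lemma dirD_mult:
  "f differentiable (at x) \<Longrightarrow> h differentiable (at x) \<Longrightarrow>
    dirD X (\<lambda>y. f y * h y) x = dirD X f x * h x + f x * dirD X h x"
  unfolding dirD_def by (simp add: pd_mult sum.distrib sum_distrib_left sum_distrib_right algebra_simps)

lemma dirD_cmult: "f differentiable (at x) \<Longrightarrow> dirD X (\<lambda>y. c * f y) x = c * dirD X f x"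
  using dirD_mult[of "\<lambda>_. c" x f X] by simp

lemma dirD_sum:
  "finite S \<Longrightarrow> (\<And>a. a \<in> S \<Longrightarrow> f a differentiable (at x)) \<Longrightarrow>
    dirD X (\<lambda>y. \<Sum>a\<in>S. f a y) x = (\<Sum>a\<in>S. dirD X (f a) x)"
  unfolding dirD_def by (simp add: pd_sum sum_distrib_left) (rule sum.swap)

locale open_domain =
  fixes U :: "(real^'n::finite) set"
  assumes open_U: "open U"
begin

lemma smooth_imp_differentiable: "smooth_fun U f \<Longrightarrow> x \<in> U \<Longrightarrow> f differentiable (at x)"
  by (rule smooth_differentiable_at[OF open_U])

lemma smooth_vf_component: "smooth_vf U X \<Longrightarrow> smooth_fun U (\<lambda>y. X y $ k)"
  unfolding smooth_vf_def by blast

lemma smooth_vfI: "(\<And>k. smooth_fun U (\<lambda>y. X y $ k)) \<Longrightarrow> smooth_vf U X"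
  unfolding smooth_vf_def by blast

lemma smooth_vf_differentiable:
  "smooth_vf U X \<Longrightarrow> x \<in> U \<Longrightarrow> (\<lambda>y. X y $ k) differentiable (at x)"
  by (rule smooth_imp_differentiable[OF smooth_vf_component])

lemma smooth_vf_const: "smooth_vf U (\<lambda>y. c)"
  by (rule smooth_vfI) simp

lemma smooth_vf_diff: "smooth_vf U X \<Longrightarrow> smooth_vf U Y \<Longrightarrow> smooth_vf U (\<lambda>y. X y - Y y)"
  by (intro smooth_vfI, simp, intro smooth_diff[OF open_U] smooth_vf_component)

lemma smooth_vf_matrix_vector_mult:
  assumes A: "\<And>k i. smooth_fun U (\<lambda>y. A y $ k $ i)" and X: "smooth_vf U X"
  shows "smooth_vf U (\<lambda>y. A y *v X y)"
proof (rule smooth_vfI)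
  fix k
  have "smooth_fun U (\<lambda>y. \<Sum>i\<in>UNIV. A y $ k $ i * X y $ i)"
    by (rule smooth_sum[OF open_U]) (auto intro!: smooth_mult[OF open_U] A smooth_vf_component[OF X])
  then show "smooth_fun U (\<lambda>y. (A y *v X y) $ k)"
    by (simp add: matrix_vector_mult_def)
qed

lemma smooth_inner:
  assumes X: "smooth_vf U X" and Y: "smooth_vf U Y"
  shows "smooth_fun U (\<lambda>y. X y \<bullet> Y y)"
  unfolding inner_vec_def
  by (rule smooth_sum[OF open_U])
    (auto intro!: smooth_mult[OF open_U] smooth_vf_component[OF X] smooth_vf_component[OF Y])

lemma smooth_jacobian: "smooth_vf U Y \<Longrightarrow> smooth_fun U (\<lambda>y. jacobian Y y $ k $ i)"
  unfolding jacobian_def by (simp add: smooth_pd smooth_vf_component)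

lemma smooth_vf_vdirD: "smooth_vf U X \<Longrightarrow> smooth_vf U Y \<Longrightarrow> smooth_vf U (vdirD X Y)"
  unfolding vdirD_eq_jacobian by (intro smooth_vf_matrix_vector_mult smooth_jacobian)

lemma smooth_vf_lie: "smooth_vf U X \<Longrightarrow> smooth_vf U Y \<Longrightarrow> smooth_vf U (lie X Y)"
  unfolding lie_def by (intro smooth_vf_diff smooth_vf_vdirD)

lemma smooth_vf_grad: "smooth_fun U f \<Longrightarrow> smooth_vf U (grad f)"
  by (intro smooth_vfI) (simp add: grad_def smooth_pd)

lemma smooth_dirD: "smooth_vf U X \<Longrightarrow> smooth_fun U f \<Longrightarrow> smooth_fun U (dirD X f)"
  unfolding dirD_def
  by (intro smooth_sum[OF open_U] smooth_mult[OF open_U] smooth_vf_component smooth_pd) auto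

lemma dirD_cong:
  assumes "x \<in> U" "\<And>y. y \<in> U \<Longrightarrow> f y = h y"
  shows "dirD X f x = dirD X h x"
  unfolding dirD_def using pd_cong[OF open_U assms] by simp

lemma jacobian_cong:
  assumes "x \<in> U" "\<And>y. y \<in> U \<Longrightarrow> Y y = Y' y"
  shows "jacobian Y x = jacobian Y' x"
proof -
  have "pd i (\<lambda>z. Y z $ k) x = pd i (\<lambda>z. Y' z $ k) x" for i k
    by (rule pd_cong[OF open_U assms(1)]) (simp add: assms(2))
  then show ?thesis
    unfolding jacobian_def by (simp add: vec_eq_iff)
qed

lemma dirD_inner:
  assumes "smooth_vf U A" "smooth_vf U B" "x \<in> U"
  shows "dirD X (\<lambda>y. A y \<bullet> B y) x = vdirD X A x \<bullet> B x + A x \<bullet> vdirD X B x"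
proof -
  have "dirD X (\<lambda>y. A y \<bullet> B y) x = dirD X (\<lambda>y. \<Sum>k\<in>UNIV. A y $ k * B y $ k) x"
    by (simp add: inner_vec_def)
  also have "\<dots> = (\<Sum>k\<in>UNIV. dirD X (\<lambda>y. A y $ k * B y $ k) x)"
    using assms by (intro dirD_sum) (auto intro!: differentiable_mult smooth_vf_differentiable)
  also have "\<dots> = (\<Sum>k\<in>UNIV. dirD X (\<lambda>y. A y $ k) x * B x $ k + A x $ k * dirD X (\<lambda>y. B y $ k) x)"
    using assms by (intro sum.cong refl dirD_mult smooth_vf_differentiable)
  also have "\<dots> = vdirD X A x \<bullet> B x + A x \<bullet> vdirD X B x"
    by (simp add: vdirD_def inner_vec_def sum.distrib mult.commute)
  finally show ?thesis .
qed

lemma vdirD_minus: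
  assumes "smooth_vf U A" "x \<in> U"
  shows "vdirD X (\<lambda>y. - A y) x = - vdirD X A x"
  using dirD_diff[of "\<lambda>_. 0" x "\<lambda>y. A y $ k" X for k] assms
  by (simp add: vdirD_def vec_eq_iff smooth_vf_differentiable)

lemma vdirD_matrix_vector_mult:
  assumes "\<And>a b. smooth_fun U (\<lambda>y. M y $ a $ b)" "smooth_vf U Z" "x \<in> U"
  shows "vdirD X (\<lambda>y. M y *v Z y) x = M x *v vdirD X Z x + mat_dirD X M x *v Z x"
proof -
  have "dirD X (\<lambda>y. \<Sum>b\<in>UNIV. M y $ a $ b * Z y $ b) x
      = (\<Sum>b\<in>UNIV. dirD X (\<lambda>y. M y $ a $ b) x * Z x $ b + M x $ a $ b * dirD X (\<lambda>y. Z y $ b) x)" for a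
    using assms
    by (simp add: dirD_sum dirD_mult smooth_imp_differentiable smooth_vf_differentiable)
  then show ?thesis
    by (simp add: vec_eq_iff vdirD_def matrix_vector_mult_def mat_dirD_def sum.distrib algebra_simps)
qed

lemma jacobian_grad_sym:
  "smooth_fun U f \<Longrightarrow> x \<in> U \<Longrightarrow> jacobian (grad f) x $ j $ i = jacobian (grad f) x $ i $ j"
  unfolding jacobian_def grad_def using smooth_pd_commute[OF open_U] by simp

lemma dirD_lie:
  assumes V: "smooth_vf U V" and W: "smooth_vf U W" and f: "smooth_fun U f" and x: "x \<in> U"
  shows "dirD (lie V W) f x = dirD V (dirD W f) x - dirD W (dirD V f) x"
proof -
  let ?H = "jacobian (grad f) x"
  have second: "dirD A (dirD B f) x = (?H *v A x) \<bullet> B x + grad f x \<bullet> (jacobian B x *v A x)"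
    if "smooth_vf U A" "smooth_vf U B" for A B
  proof -
    have "dirD A (dirD B f) x = dirD A (\<lambda>y. B y \<bullet> grad f y) x"
      by (simp add: dirD_eq_inner_grad[abs_def])
    also have "\<dots> = vdirD A B x \<bullet> grad f x + B x \<bullet> vdirD A (grad f) x"
      using that(2) smooth_vf_grad[OF f] x by (rule dirD_inner)
    finally show ?thesis by (simp add: vdirD_eq_jacobian inner_commute)
  qed
  have "(?H *v V x) \<bullet> W x = (\<Sum>j\<in>UNIV. \<Sum>i\<in>UNIV. ?H $ j $ i * V x $ i * W x $ j)"
    by (simp add: matrix_vector_mult_def inner_vec_def sum_distrib_left sum_distrib_right
        mult.commute mult.left_commute)
  also have "\<dots> = (\<Sum>i\<in>UNIV. \<Sum>j\<in>UNIV. ?H $ i $ j * W x $ j * V x $ i)"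
    using jacobian_grad_sym[OF f x] by (subst sum.swap) (simp add: mult.commute mult.left_commute)
  also have "\<dots> = (?H *v W x) \<bullet> V x"
    by (simp add: matrix_vector_mult_def inner_vec_def sum_distrib_left sum_distrib_right
        mult.commute mult.left_commute)
  finally show ?thesis
    unfolding second[OF V W] second[OF W V]
    by (simp add: dirD_eq_inner_grad lie_eq_jacobian inner_diff_right inner_commute)
qed

lemma lie_jacobi:
  assumes A: "smooth_vf U A" and B: "smooth_vf U B" and C: "smooth_vf U C" and x: "x \<in> U"
  shows "lie (lie A B) C x + lie B (lie A C) x = lie A (lie B C) x"
proof -
  have component: "lie P Q y $ k = dirD P (\<lambda>z. Q z $ k) y - dirD Q (\<lambda>z. P z $ k) y"
    for P Q :: "real^'n \<Rightarrow> real^'n" and y k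
    by (simp add: lie_def vdirD_def)
  have "dirD R (\<lambda>z. lie P Q z $ k) x
      = dirD R (dirD P (\<lambda>z. Q z $ k)) x - dirD R (dirD Q (\<lambda>z. P z $ k)) x"
    if "smooth_vf U P" "smooth_vf U Q" for P Q R k
    unfolding component
    by (intro dirD_diff smooth_imp_differentiable[OF _ x] smooth_dirD that smooth_vf_component)
  then show ?thesis
    by (simp add: vec_eq_iff component dirD_lie A B C x smooth_vf_component smooth_vf_lie)
qed

end

section \<open>Riemannian geometry in a chart\<close>

definition cov_jacobian ::
  "(real^'n::finite \<Rightarrow> real^'n^'n) \<Rightarrow> (real^'n \<Rightarrow> real^'n) \<Rightarrow> real^'n \<Rightarrow> real^'n^'n" where
  "cov_jacobian g Y y = (\<chi> k i. pd i (\<lambda>z. Y z $ k) y + (\<Sum>j\<in>UNIV. christoffel g y k i j * Y y $ j))"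

definition christoffel_matrix ::
  "(real^'n::finite \<Rightarrow> real^'n^'n) \<Rightarrow> real^'n \<Rightarrow> real^'n \<Rightarrow> real^'n^'n" where
  "christoffel_matrix g y u = (\<chi> m a. \<Sum>i\<in>UNIV. u $ i * christoffel g y m i a)"

lemma nabla_eq_cov_jacobian: "nabla g X Y y = cov_jacobian g Y y *v X y"
proof -
  have "nabla g X Y y $ k = (cov_jacobian g Y y *v X y) $ k" for k
  proof -
    have "nabla g X Y y $ k = (\<Sum>i\<in>UNIV. X y $ i * pd i (\<lambda>z. Y z $ k) y)
        + (\<Sum>i\<in>UNIV. \<Sum>j\<in>UNIV. christoffel g y k i j * X y $ i * Y y $ j)"
      by (simp add: nabla_def vdirD_def dirD_def)
    also have "\<dots> = (\<Sum>i\<in>UNIV.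
        (pd i (\<lambda>z. Y z $ k) y + (\<Sum>j\<in>UNIV. christoffel g y k i j * Y y $ j)) * X y $ i)"
      by (simp add: sum.distrib algebra_simps sum_distrib_left sum_distrib_right)
    finally show ?thesis
      by (simp add: cov_jacobian_def matrix_vector_mult_def)
  qed
  then show ?thesis by (simp add: vec_eq_iff)
qed

lemma nabla_eq_christoffel_matrix:
  "nabla g X Y y = jacobian Y y *v X y + christoffel_matrix g y (X y) *v Y y"
proof -
  have "(\<Sum>i\<in>UNIV. \<Sum>j\<in>UNIV. christoffel g y k i j * X y $ i * Y y $ j) =
        (\<Sum>j\<in>UNIV. (\<Sum>i\<in>UNIV. X y $ i * christoffel g y k i j) * Y y $ j)" for k
    by (subst sum.swap) (simp add: sum_distrib_left sum_distrib_right mult.commute mult.left_commute)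
  then show ?thesis
    by (simp add: nabla_def vdirD_eq_jacobian christoffel_matrix_def matrix_vector_mult_def vec_eq_iff)
qed

lemma nabla_const_zero [simp]: "nabla g X (\<lambda>_. 0) x = 0"
  by (simp add: nabla_eq_christoffel_matrix)

lemma matrix_vector_mult_minus_right: "(A::real^'n::finite^'m) *v (- v) = - (A *v v)"
  by (simp add: matrix_vector_mult_def vec_eq_iff sum_negf)

lemma inner_vector_matrix_mult: "(u::real^'n::finite) \<bullet> (w v* A) = (A *v u) \<bullet> w"
  by (metis dot_lmul_matrix inner_commute)

lemma gpt_sum: "gpt g y u v = (\<Sum>i\<in>UNIV. \<Sum>j\<in>UNIV. u $ i * g y $ i $ j * v $ j)"
  by (simp add: gpt_def inner_vec_def matrix_vector_mult_def sum_distrib_left mult.assoc)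

lemma gpt_add_left: "gpt g y (u + u') v = gpt g y u v + gpt g y u' v"
  by (simp add: gpt_def inner_add_left)

lemma gpt_add_right: "gpt g y u (v + v') = gpt g y u v + gpt g y u v'"
  by (simp add: gpt_def matrix_vector_right_distrib inner_add_right)

lemma gpt_diff_left: "gpt g y (u - u') v = gpt g y u v - gpt g y u' v"
  by (simp add: gpt_def inner_diff_left)

lemma gpt_diff_right: "gpt g y u (v - v') = gpt g y u v - gpt g y u v'"
  by (simp add: gpt_def matrix_vector_mult_diff_distrib inner_diff_right)

lemma gpt_scale_left: "gpt g y (c *\<^sub>R u) v = c * gpt g y u v"
  by (simp add: gpt_def)

lemma gpt_scale_right: "gpt g y u (c *\<^sub>R v) = c * gpt g y u v"
  by (simp add: gpt_def matrix_vector_mult_scaleR)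

lemma gpt_minus_left: "gpt g y (- u) v = - gpt g y u v"
  by (simp add: gpt_def)

lemma gpt_minus_right: "gpt g y u (- v) = - gpt g y u v"
  using gpt_scale_right[of g y u "-1" v] by simp

lemma gpt_zero_left [simp]: "gpt g y 0 v = 0"
  by (simp add: gpt_def)

lemma gpt_zero_right [simp]: "gpt g y u 0 = 0"
  by (simp add: gpt_def)

lemmas gpt_linear = gpt_add_left gpt_add_right gpt_diff_left gpt_diff_right
  gpt_scale_left gpt_scale_right gpt_minus_left gpt_minus_right

locale riemannian_domain = open_domain U for U :: "(real^'n::finite) set" +
  fixes g :: "real^'n \<Rightarrow> real^'n^'n"
  assumes smooth_metric: "smooth_tf U g"
    and metric_symmetric: "y \<in> U \<Longrightarrow> transpose (g y) = g y"
    and metric_positive: "y \<in> U \<Longrightarrow> v \<noteq> 0 \<Longrightarrow> 0 < gpt g y v v"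
begin

lemma metric_entry_sym: "y \<in> U \<Longrightarrow> g y $ j $ i = g y $ i $ j"
  using arg_cong[where f = "\<lambda>A. A $ i $ j", OF metric_symmetric[of y]] by (simp add: transpose_def)

lemma smooth_metric_entry: "smooth_fun U (\<lambda>y. g y $ i $ j)"
  using smooth_metric unfolding smooth_tf_def by blast

lemma pd_metric_entry_sym: "y \<in> U \<Longrightarrow> pd l (\<lambda>z. g z $ j $ i) y = pd l (\<lambda>z. g z $ i $ j) y"
  by (rule pd_cong[OF open_U]) (auto simp: metric_entry_sym)

lemma gpt_commute:
  assumes "y \<in> U"
  shows "gpt g y u v = gpt g y v u"
proof -
  have "(\<Sum>i\<in>UNIV. \<Sum>j\<in>UNIV. u $ i * g y $ i $ j * v $ j)
      = (\<Sum>j\<in>UNIV. \<Sum>i\<in>UNIV. u $ i * g y $ i $ j * v $ j)"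
    by (rule sum.swap)
  also have "\<dots> = (\<Sum>j\<in>UNIV. \<Sum>i\<in>UNIV. v $ j * g y $ j $ i * u $ i)"
    using metric_entry_sym[OF assms] by (simp add: mult.commute mult.left_commute)
  finally show ?thesis
    by (simp add: gpt_sum)
qed

lemma metric_nondegenerate: "y \<in> U \<Longrightarrow> (\<And>w. gpt g y v w = 0) \<Longrightarrow> v = 0"
  using metric_positive[of y v] by force

lemma metric_invertible: "y \<in> U \<Longrightarrow> invertible (g y)"
  unfolding invertible_left_inverse matrix_left_invertible_ker
  using metric_positive[of y] by (force simp: gpt_def)

lemma metric_mult_inverse: "y \<in> U \<Longrightarrow> g y ** matrix_inv (g y) = mat 1"
  using someI_ex[OF metric_invertible[of y, unfolded invertible_def]]
  unfolding matrix_inv_def by blast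

lemma metric_inverse_entry_sum:
  "y \<in> U \<Longrightarrow> (\<Sum>m\<in>UNIV. g y $ b $ m * matrix_inv (g y) $ m $ l) = (if b = l then 1 else 0)"
  using metric_mult_inverse[of y] by (simp add: matrix_matrix_mult_def mat_def vec_eq_iff)

lemma inverse_metric_cramer:
  assumes "y \<in> U"
  shows "matrix_inv (g y) $ k $ l =
    det (\<chi> i j. if j = k then (if i = l then 1 else 0) else g y $ i $ j) / det (g y)"
proof -
  let ?b = "(\<chi> i. if i = l then 1 else 0) :: real^'n"
  have "g y *v (\<chi> k. matrix_inv (g y) $ k $ l) = ?b"
    using metric_mult_inverse[OF assms]
    by (simp add: matrix_vector_mult_def matrix_matrix_mult_def vec_eq_iff mat_def)
  moreover have "det (g y) \<noteq> 0"
    using metric_invertible[OF assms] invertible_det_nz by blast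
  ultimately have "(\<chi> k. matrix_inv (g y) $ k $ l)
      = (\<chi> k. det (\<chi> i j. if j = k then ?b $ i else g y $ i $ j) / det (g y))"
    using cramer by blast
  moreover have "(\<chi> i j. if j = k then ?b $ i else g y $ i $ j)
      = (\<chi> i j. if j = k then (if i = l then 1 else 0) else g y $ i $ j)" for k
    by (simp add: vec_eq_iff)
  ultimately have "(\<chi> k. matrix_inv (g y) $ k $ l)
      = (\<chi> k. det (\<chi> i j. if j = k then (if i = l then 1 else 0) else g y $ i $ j) / det (g y))"
    by simp
  from arg_cong[where f = "\<lambda>v. v $ k", OF this] show ?thesis
    by simp
qed

lemma smooth_inverse_metric: "smooth_fun U (\<lambda>y. matrix_inv (g y) $ k $ l)"
proof (rule smooth_cong[OF open_U])
  show "smooth_fun U (\<lambda>y. det (\<chi> i j. if j = k then (if i = l then 1 else 0) else g y $ i $ j)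
      * inverse (det (g y)))"
    using metric_invertible invertible_det_nz
    by (intro smooth_mult[OF open_U] smooth_inverse[OF open_U] smooth_det[OF open_U])
      (auto simp: smooth_metric_entry intro!: smooth_if)
  show "\<And>y. y \<in> U \<Longrightarrow> matrix_inv (g y) $ k $ l =
      det (\<chi> i j. if j = k then (if i = l then 1 else 0) else g y $ i $ j) * inverse (det (g y))"
    by (simp add: inverse_metric_cramer divide_inverse)
qed

lemma smooth_christoffel: "smooth_fun U (\<lambda>y. christoffel g y k i j)"
  unfolding christoffel_def
  by (intro smooth_mult[OF open_U] smooth_sum[OF open_U] smooth_add[OF open_U] smooth_diff[OF open_U]
      smooth_pd smooth_metric_entry smooth_inverse_metric smooth_const finite_class.finite_UNIV)

lemma christoffel_sym: "y \<in> U \<Longrightarrow> christoffel g y k i j = christoffel g y k j i"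
  unfolding christoffel_def using pd_metric_entry_sym[of y _ i j] by (simp add: algebra_simps)

lemma pd_christoffel_sym:
  "x \<in> U \<Longrightarrow> pd p (\<lambda>y. christoffel g y k i j) x = pd p (\<lambda>y. christoffel g y k j i) x"
  by (rule pd_cong[OF open_U]) (auto simp: christoffel_sym)

lemma christoffel_lower:
  assumes "y \<in> U"
  shows "(\<Sum>m\<in>UNIV. g y $ b $ m * christoffel g y m i a) =
    (pd i (\<lambda>z. g z $ a $ b) y + pd a (\<lambda>z. g z $ i $ b) y - pd b (\<lambda>z. g z $ i $ a) y) / 2"
proof -
  let ?L = "\<lambda>l. pd i (\<lambda>z. g z $ a $ l) y + pd a (\<lambda>z. g z $ i $ l) y - pd l (\<lambda>z. g z $ i $ a) y"
  have "(\<Sum>m\<in>UNIV. g y $ b $ m * christoffel g y m i a) =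
      (\<Sum>m\<in>UNIV. \<Sum>l\<in>UNIV. g y $ b $ m * matrix_inv (g y) $ m $ l * ?L l) / 2"
    unfolding christoffel_def
    by (simp add: sum_distrib_left sum_distrib_right sum_divide_distrib mult.assoc mult.left_commute)
  also have "\<dots> = (\<Sum>l\<in>UNIV. (\<Sum>m\<in>UNIV. g y $ b $ m * matrix_inv (g y) $ m $ l) * ?L l) / 2"
    by (subst sum.swap) (simp add: sum_distrib_right)
  also have "\<dots> = ?L b / 2"
    unfolding metric_inverse_entry_sum[OF assms]
    by (simp add: if_distrib[of "\<lambda>c. c * _"] cong: if_cong)
  finally show ?thesis .
qed

lemma pd_metric_eq_christoffel:
  assumes "y \<in> U"
  shows "pd i (\<lambda>z. g z $ a $ b) y =
    (\<Sum>m\<in>UNIV. g y $ m $ b * christoffel g y m i a) + (\<Sum>m\<in>UNIV. g y $ a $ m * christoffel g y m i b)"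
  using christoffel_lower[OF assms, of b i a] christoffel_lower[OF assms, of a i b]
    metric_entry_sym[OF assms] pd_metric_entry_sym[OF assms, of i a b]
  by (simp add: field_simps)

lemma smooth_cov_jacobian: "smooth_vf U Y \<Longrightarrow> smooth_fun U (\<lambda>y. cov_jacobian g Y y $ k $ i)"
  unfolding cov_jacobian_def
  by (simp, intro smooth_add[OF open_U] smooth_sum[OF open_U] smooth_mult[OF open_U] smooth_pd
      smooth_vf_component smooth_christoffel) auto

lemma smooth_vf_nabla: "smooth_vf U X \<Longrightarrow> smooth_vf U Y \<Longrightarrow> smooth_vf U (nabla g X Y)"
  unfolding nabla_eq_cov_jacobian by (intro smooth_vf_matrix_vector_mult smooth_cov_jacobian)

lemma smooth_vf_curv:
  "smooth_vf U X \<Longrightarrow> smooth_vf U Y \<Longrightarrow> smooth_vf U Z \<Longrightarrow> smooth_vf U (curv g X Y Z)"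
  unfolding curv_def by (intro smooth_vf_diff smooth_vf_nabla smooth_vf_lie)

lemma smooth_gpt: "smooth_vf U X \<Longrightarrow> smooth_vf U Y \<Longrightarrow> smooth_fun U (\<lambda>y. gpt g y (X y) (Y y))"
  unfolding gpt_def by (intro smooth_inner smooth_vf_matrix_vector_mult smooth_metric_entry)

lemma nabla_cong:
  assumes "x \<in> U" "\<And>y. y \<in> U \<Longrightarrow> Y y = Y' y"
  shows "nabla g X Y x = nabla g X Y' x"
  using jacobian_cong[OF assms] assms by (simp add: nabla_eq_christoffel_matrix)

lemma nabla_minus:
  assumes "smooth_vf U V" "x \<in> U"
  shows "nabla g X (\<lambda>y. - V y) x = - nabla g X V x"
  using vdirD_minus[OF assms, of X]
  by (simp add: nabla_eq_christoffel_matrix vdirD_eq_jacobian matrix_vector_mult_minus_right)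

lemma christoffel_matrix_sym: "x \<in> U \<Longrightarrow> christoffel_matrix g x u *v v = christoffel_matrix g x v *v u"
proof -
  assume "x \<in> U"
  have "(\<Sum>j\<in>UNIV. (\<Sum>i\<in>UNIV. u $ i * christoffel g x k i j) * v $ j)
      = (\<Sum>j\<in>UNIV. (\<Sum>i\<in>UNIV. v $ i * christoffel g x k i j) * u $ j)" for k
  proof -
    have "(\<Sum>j\<in>UNIV. (\<Sum>i\<in>UNIV. u $ i * christoffel g x k i j) * v $ j)
        = (\<Sum>i\<in>UNIV. \<Sum>j\<in>UNIV. u $ i * v $ j * christoffel g x k i j)"
      by (subst sum.swap) (simp add: sum_distrib_left sum_distrib_right mult.commute mult.left_commute)
    also have "\<dots> = (\<Sum>i\<in>UNIV. \<Sum>j\<in>UNIV. u $ i * v $ j * christoffel g x k j i)"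
      using christoffel_sym[OF \<open>x \<in> U\<close>] by simp
    also have "\<dots> = (\<Sum>j\<in>UNIV. (\<Sum>i\<in>UNIV. v $ i * christoffel g x k i j) * u $ j)"
      by (simp add: sum_distrib_left sum_distrib_right mult.commute mult.left_commute)
    finally show ?thesis .
  qed
  then show ?thesis
    by (simp add: christoffel_matrix_def matrix_vector_mult_def vec_eq_iff)
qed

lemma nabla_torsion_free: "x \<in> U \<Longrightarrow> nabla g X Y x - nabla g Y X x = lie X Y x"
  by (simp add: nabla_eq_christoffel_matrix lie_eq_jacobian christoffel_matrix_sym)

lemma mat_dirD_metric:
  assumes "x \<in> U"
  shows "mat_dirD X g x
    = transpose (christoffel_matrix g x (X x)) ** g x + g x ** christoffel_matrix g x (X x)"
proof -
  have "dirD X (\<lambda>y. g y $ a $ b) x =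
     (\<Sum>m\<in>UNIV. (\<Sum>i\<in>UNIV. X x $ i * christoffel g x m i a) * g x $ m $ b)
     + (\<Sum>m\<in>UNIV. g x $ a $ m * (\<Sum>i\<in>UNIV. X x $ i * christoffel g x m i b))" for a b
  proof -
    have "dirD X (\<lambda>y. g y $ a $ b) x = (\<Sum>i\<in>UNIV. X x $ i *
        ((\<Sum>m\<in>UNIV. g x $ m $ b * christoffel g x m i a)
          + (\<Sum>m\<in>UNIV. g x $ a $ m * christoffel g x m i b)))"
      unfolding dirD_def using pd_metric_eq_christoffel[OF assms] by simp
    also have "\<dots> = (\<Sum>m\<in>UNIV. \<Sum>i\<in>UNIV. X x $ i * christoffel g x m i a * g x $ m $ b)
        + (\<Sum>m\<in>UNIV. \<Sum>i\<in>UNIV. g x $ a $ m * (X x $ i * christoffel g x m i b))"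
      by (subst (1 2) sum.swap) (simp add: sum.distrib sum_distrib_left algebra_simps)
    finally show ?thesis
      by (simp add: sum_distrib_left sum_distrib_right)
  qed
  then show ?thesis
    by (simp add: mat_dirD_def christoffel_matrix_def matrix_matrix_mult_def transpose_def vec_eq_iff)
qed

lemma dirD_gpt:
  assumes X: "smooth_vf U X" and Y: "smooth_vf U Y" and Z: "smooth_vf U Z" and x: "x \<in> U"
  shows "dirD X (\<lambda>y. gpt g y (Y y) (Z y)) x
    = gpt g x (nabla g X Y x) (Z x) + gpt g x (Y x) (nabla g X Z x)"
proof -
  let ?A = "christoffel_matrix g x (X x)"
  have "dirD X (\<lambda>y. gpt g y (Y y) (Z y)) x
      = vdirD X Y x \<bullet> (g x *v Z x) + Y x \<bullet> vdirD X (\<lambda>y. g y *v Z y) x"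
    unfolding gpt_def
    by (rule dirD_inner[OF Y smooth_vf_matrix_vector_mult[OF smooth_metric_entry Z] x])
  also have "vdirD X (\<lambda>y. g y *v Z y) x = g x *v vdirD X Z x + mat_dirD X g x *v Z x"
    by (rule vdirD_matrix_vector_mult[OF smooth_metric_entry Z x])
  also have "mat_dirD X g x *v Z x = transpose ?A *v (g x *v Z x) + g x *v (?A *v Z x)"
    unfolding mat_dirD_metric[OF x]
    by (simp add: matrix_vector_mult_add_rdistrib matrix_vector_mul_assoc)
  finally have "dirD X (\<lambda>y. gpt g y (Y y) (Z y)) x = vdirD X Y x \<bullet> (g x *v Z x)
     + Y x \<bullet> (g x *v vdirD X Z x) + (?A *v Y x) \<bullet> (g x *v Z x) + Y x \<bullet> (g x *v (?A *v Z x))"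
    by (simp add: inner_add_right inner_vector_matrix_mult)
  also have "\<dots> = gpt g x (nabla g X Y x) (Z x) + gpt g x (Y x) (nabla g X Z x)"
    by (simp add: gpt_def nabla_eq_christoffel_matrix vdirD_eq_jacobian inner_add_left inner_add_right
        matrix_vector_right_distrib)
  finally show ?thesis .
qed

end

definition second_nabla_comp ::
  "(real^'n::finite \<Rightarrow> real^'n^'n) \<Rightarrow> (real^'n \<Rightarrow> real^'n) \<Rightarrow> real^'n \<Rightarrow> 'n \<Rightarrow> 'n \<Rightarrow> 'n \<Rightarrow> real"
  where "second_nabla_comp g Z x k i b = pd i (\<lambda>y. cov_jacobian g Z y $ k $ b) x
    + (\<Sum>j\<in>UNIV. christoffel g x k i j * cov_jacobian g Z x $ j $ b)"

definition riemann_comp ::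
  "(real^'n::finite \<Rightarrow> real^'n^'n) \<Rightarrow> real^'n \<Rightarrow> 'n \<Rightarrow> 'n \<Rightarrow> 'n \<Rightarrow> 'n \<Rightarrow> real"
  where "riemann_comp g x k i b l =
    pd i (\<lambda>y. christoffel g y k b l) x - pd b (\<lambda>y. christoffel g y k i l) x
      + (\<Sum>m\<in>UNIV. christoffel g x k i m * christoffel g x m b l
        - christoffel g x k b m * christoffel g x m i l)"

definition riemann ::
  "(real^'n::finite \<Rightarrow> real^'n^'n) \<Rightarrow> real^'n \<Rightarrow> real^'n \<Rightarrow> real^'n \<Rightarrow> real^'n \<Rightarrow> real^'n"
  where "riemann g x u v w =
    (\<chi> k. \<Sum>i\<in>UNIV. \<Sum>b\<in>UNIV. \<Sum>l\<in>UNIV. riemann_comp g x k i b l * u $ i * v $ b * w $ l)"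

lemma riemann_comp_antisym: "riemann_comp g x k b i l = - riemann_comp g x k i b l"
  by (simp add: riemann_comp_def sum_subtractf algebra_simps)

lemma riemann_antisym: "riemann g x v u w = - riemann g x u v w"
proof -
  have "(\<Sum>i\<in>UNIV. \<Sum>b\<in>UNIV. \<Sum>l\<in>UNIV. riemann_comp g x k i b l * v $ i * u $ b * w $ l)
     = - (\<Sum>i\<in>UNIV. \<Sum>b\<in>UNIV. \<Sum>l\<in>UNIV. riemann_comp g x k i b l * u $ i * v $ b * w $ l)" for k
  proof -
    have "(\<Sum>i\<in>UNIV. \<Sum>b\<in>UNIV. \<Sum>l\<in>UNIV. riemann_comp g x k i b l * v $ i * u $ b * w $ l)
     = (\<Sum>b\<in>UNIV. \<Sum>i\<in>UNIV. \<Sum>l\<in>UNIV. riemann_comp g x k i b l * v $ i * u $ b * w $ l)"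
      by (rule sum.swap)
    also have "\<dots>
      = (\<Sum>b\<in>UNIV. \<Sum>i\<in>UNIV. \<Sum>l\<in>UNIV. - (riemann_comp g x k b i l * u $ b * v $ i * w $ l))"
      by (intro sum.cong refl) (subst riemann_comp_antisym, simp add: mult.commute mult.left_commute)
    also have "\<dots> = - (\<Sum>i\<in>UNIV. \<Sum>b\<in>UNIV. \<Sum>l\<in>UNIV. riemann_comp g x k i b l * u $ i * v $ b * w $ l)"
      by (simp add: sum_negf)
    finally show ?thesis .
  qed
  then show ?thesis unfolding riemann_def by (simp add: vec_eq_iff)
qed

lemma sum_rotate3:
  "(\<Sum>i\<in>UNIV. \<Sum>b\<in>UNIV. \<Sum>l\<in>UNIV. f i b l) = (\<Sum>l\<in>UNIV. \<Sum>i\<in>UNIV. \<Sum>b\<in>UNIV. f i b l :: real)"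
proof -
  have "(\<Sum>i\<in>UNIV. \<Sum>b\<in>UNIV. \<Sum>l\<in>UNIV. f i b l) = (\<Sum>i\<in>UNIV. \<Sum>l\<in>UNIV. \<Sum>b\<in>UNIV. f i b l)"
    by (intro sum.cong refl sum.swap)
  also have "\<dots> = (\<Sum>l\<in>UNIV. \<Sum>i\<in>UNIV. \<Sum>b\<in>UNIV. f i b l)" by (rule sum.swap)
  finally show ?thesis .
qed

lemma linear_riemann_middle: "linear (\<lambda>v. riemann g x u v w)"
  by (rule linearI) (simp_all add: riemann_def vec_eq_iff sum.distrib sum_distrib_left algebra_simps)

lemma linear_riemann_right: "linear (\<lambda>w. riemann g x u v w)"
  by (rule linearI) (simp_all add: riemann_def vec_eq_iff sum.distrib sum_distrib_left algebra_simps)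

context riemannian_domain
begin

lemma cov_jacobian_nabla:
  assumes Y: "smooth_vf U Y" and Z: "smooth_vf U Z" and x: "x \<in> U"
  shows "cov_jacobian g (nabla g Y Z) x $ k $ i
    = (\<Sum>b\<in>UNIV. second_nabla_comp g Z x k i b * Y x $ b)
      + (cov_jacobian g Z x ** jacobian Y x) $ k $ i"
proof -
  have "pd i (\<lambda>y. nabla g Y Z y $ k) x = (\<Sum>b\<in>UNIV. pd i (\<lambda>y. cov_jacobian g Z y $ k $ b) x * Y x $ b
      + cov_jacobian g Z x $ k $ b * pd i (\<lambda>y. Y y $ b) x)"
    unfolding nabla_eq_cov_jacobian matrix_vector_mult_def
    using Y Z x by (simp add: pd_sum pd_mult smooth_imp_differentiable
        smooth_cov_jacobian smooth_vf_differentiable)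
  moreover have "(\<Sum>j\<in>UNIV. christoffel g x k i j * (\<Sum>b\<in>UNIV. cov_jacobian g Z x $ j $ b * Y x $ b))
      = (\<Sum>b\<in>UNIV. (\<Sum>j\<in>UNIV. christoffel g x k i j * cov_jacobian g Z x $ j $ b) * Y x $ b)"
    by (simp add: sum_distrib_left sum_distrib_right mult.assoc) (rule sum.swap)
  ultimately show ?thesis
    by (simp add: cov_jacobian_def[of g "nabla g Y Z"] second_nabla_comp_def nabla_eq_cov_jacobian
        matrix_vector_mult_def matrix_matrix_mult_def jacobian_def sum.distrib algebra_simps)
qed

lemma nabla_nabla:
  assumes X: "smooth_vf U X" and Y: "smooth_vf U Y" and Z: "smooth_vf U Z" and x: "x \<in> U"
  shows "nabla g X (nabla g Y Z) x =
    (\<chi> k. \<Sum>i\<in>UNIV. \<Sum>b\<in>UNIV. X x $ i * Y x $ b * second_nabla_comp g Z x k i b)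
      + cov_jacobian g Z x *v vdirD X Y x"
proof -
  have "nabla g X (nabla g Y Z) x =
    (\<chi> k. \<Sum>i\<in>UNIV. \<Sum>b\<in>UNIV. X x $ i * Y x $ b * second_nabla_comp g Z x k i b)
      + (cov_jacobian g Z x ** jacobian Y x) *v X x"
    by (simp add: nabla_eq_cov_jacobian[of g X] cov_jacobian_nabla[OF Y Z x] matrix_vector_mult_def
        vec_eq_iff sum.distrib sum_distrib_left sum_distrib_right algebra_simps)
  then show ?thesis
    by (simp add: vdirD_eq_jacobian matrix_vector_mul_assoc)
qed

lemma curv_eq_second_nabla:
  assumes X: "smooth_vf U X" and Y: "smooth_vf U Y" and Z: "smooth_vf U Z" and x: "x \<in> U"
  shows "curv g X Y Z x = (\<chi> k. \<Sum>i\<in>UNIV. \<Sum>b\<in>UNIV.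
    X x $ i * Y x $ b * (second_nabla_comp g Z x k i b - second_nabla_comp g Z x k b i))"
proof -
  have swap: "(\<Sum>i\<in>UNIV. \<Sum>b\<in>UNIV. Y x $ i * X x $ b * second_nabla_comp g Z x k i b) =
      (\<Sum>i\<in>UNIV. \<Sum>b\<in>UNIV. X x $ i * Y x $ b * second_nabla_comp g Z x k b i)" for k
    by (subst sum.swap) (simp add: mult.commute)
  have "curv g X Y Z x
      = nabla g X (nabla g Y Z) x - nabla g Y (nabla g X Z) x - cov_jacobian g Z x *v lie X Y x"
    by (simp add: curv_def nabla_eq_cov_jacobian)
  also have "\<dots> = (\<chi> k. \<Sum>i\<in>UNIV. \<Sum>b\<in>UNIV. X x $ i * Y x $ b * second_nabla_comp g Z x k i b)
      - (\<chi> k. \<Sum>i\<in>UNIV. \<Sum>b\<in>UNIV. Y x $ i * X x $ b * second_nabla_comp g Z x k i b)"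
    unfolding nabla_nabla[OF X Y Z x] nabla_nabla[OF Y X Z x] lie_def
    by (simp add: matrix_vector_mult_diff_distrib)
  finally show ?thesis
    by (simp add: vec_eq_iff swap sum_subtractf right_diff_distrib)
qed

lemma second_nabla_comp_expand:
  assumes Z: "smooth_vf U Z" and x: "x \<in> U"
  shows "second_nabla_comp g Z x k i b = pd i (pd b (\<lambda>z. Z z $ k)) x
    + (\<Sum>j\<in>UNIV. pd i (\<lambda>y. christoffel g y k b j) x * Z x $ j)
    + (\<Sum>j\<in>UNIV. christoffel g x k b j * pd i (\<lambda>y. Z y $ j) x)
    + (\<Sum>j\<in>UNIV. christoffel g x k i j * pd b (\<lambda>y. Z y $ j) x)
    + (\<Sum>j\<in>UNIV. \<Sum>l\<in>UNIV. christoffel g x k i j * christoffel g x j b l * Z x $ l)"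
proof -
  have dZ: "(\<lambda>y. Z y $ j) differentiable (at x)" for j
    by (rule smooth_vf_differentiable[OF Z x])
  have dchr: "(\<lambda>y. christoffel g y k b j) differentiable (at x)" for j
    by (rule smooth_imp_differentiable[OF smooth_christoffel x])
  have "pd i (\<lambda>y. cov_jacobian g Z y $ k $ b) x
      = pd i (\<lambda>y. pd b (\<lambda>z. Z z $ k) y + (\<Sum>j\<in>UNIV. christoffel g y k b j * Z y $ j)) x"
    by (simp add: cov_jacobian_def)
  also have "\<dots> = pd i (pd b (\<lambda>z. Z z $ k)) x + (\<Sum>j\<in>UNIV. pd i (\<lambda>y. christoffel g y k b j) x * Z x $ j
      + christoffel g x k b j * pd i (\<lambda>y. Z y $ j) x)"
    using smooth_imp_differentiable[OF smooth_pd[OF smooth_vf_component[OF Z]] x] dZ dchr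
    by (simp add: pd_add pd_sum pd_mult)
  moreover have "(\<Sum>j\<in>UNIV. christoffel g x k i j * cov_jacobian g Z x $ j $ b)
      = (\<Sum>j\<in>UNIV. christoffel g x k i j * pd b (\<lambda>y. Z y $ j) x)
        + (\<Sum>j\<in>UNIV. \<Sum>l\<in>UNIV. christoffel g x k i j * christoffel g x j b l * Z x $ l)"
    by (simp add: cov_jacobian_def sum.distrib sum_distrib_left algebra_simps)
  ultimately show ?thesis
    unfolding second_nabla_comp_def by (simp add: sum.distrib algebra_simps)
qed

lemma second_nabla_comp_alternation:
  assumes Z: "smooth_vf U Z" and x: "x \<in> U"
  shows "second_nabla_comp g Z x k i b - second_nabla_comp g Z x k b i
    = (\<Sum>l\<in>UNIV. riemann_comp g x k i b l * Z x $ l)"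
proof -
  have pd_swap: "pd i (pd b (\<lambda>z. Z z $ k)) x = pd b (pd i (\<lambda>z. Z z $ k)) x"
    by (rule smooth_pd_commute[OF open_U x smooth_vf_component[OF Z]])
  have sum_swap: "(\<Sum>j\<in>UNIV. \<Sum>l\<in>UNIV. c j l * Z x $ l) = (\<Sum>l\<in>UNIV. (\<Sum>j\<in>UNIV. c j l) * Z x $ l)"
    for c :: "'n \<Rightarrow> 'n \<Rightarrow> real"
    by (subst sum.swap) (simp add: sum_distrib_right)
  have "second_nabla_comp g Z x k i b - second_nabla_comp g Z x k b i
      = (\<Sum>l\<in>UNIV. pd i (\<lambda>y. christoffel g y k b l) x * Z x $ l)
        - (\<Sum>l\<in>UNIV. pd b (\<lambda>y. christoffel g y k i l) x * Z x $ l)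
        + ((\<Sum>j\<in>UNIV. \<Sum>l\<in>UNIV. christoffel g x k i j * christoffel g x j b l * Z x $ l)
          - (\<Sum>j\<in>UNIV. \<Sum>l\<in>UNIV. christoffel g x k b j * christoffel g x j i l * Z x $ l))"
    unfolding second_nabla_comp_expand[OF Z x] pd_swap by simp
  also have "\<dots> = (\<Sum>l\<in>UNIV. riemann_comp g x k i b l * Z x $ l)"
    unfolding sum_swap by (simp add: riemann_comp_def sum_subtractf sum.distrib algebra_simps)
  finally show ?thesis .
qed

lemma curv_eq_riemann:
  assumes X: "smooth_vf U X" and Y: "smooth_vf U Y" and Z: "smooth_vf U Z" and x: "x \<in> U"
  shows "curv g X Y Z x = riemann g x (X x) (Y x) (Z x)"
  unfolding curv_eq_second_nabla[OF X Y Z x] second_nabla_comp_alternation[OF Z x] riemann_def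
  by (simp add: vec_eq_iff sum_distrib_left algebra_simps)

lemma riemann_comp_bianchi:
  assumes x: "x \<in> U"
  shows "riemann_comp g x k p q r + riemann_comp g x k q r p + riemann_comp g x k r p q = 0"
  unfolding riemann_comp_def
  using pd_christoffel_sym[OF x, of _ k q r] pd_christoffel_sym[OF x, of _ k p r]
    pd_christoffel_sym[OF x, of _ k p q] christoffel_sym[OF x, of _ q r] christoffel_sym[OF x, of _ p r]
    christoffel_sym[OF x, of _ p q]
  by (simp add: sum_subtractf sum.distrib[symmetric] algebra_simps)

lemma riemann_bianchi:
  assumes x: "x \<in> U"
  shows "riemann g x u v w + riemann g x v w u + riemann g x w u v = 0"
proof -
  have "(\<Sum>i\<in>UNIV. \<Sum>b\<in>UNIV. \<Sum>l\<in>UNIV. riemann_comp g x k i b l * u $ i * v $ b * w $ l)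
      + (\<Sum>i\<in>UNIV. \<Sum>b\<in>UNIV. \<Sum>l\<in>UNIV. riemann_comp g x k i b l * v $ i * w $ b * u $ l)
      + (\<Sum>i\<in>UNIV. \<Sum>b\<in>UNIV. \<Sum>l\<in>UNIV. riemann_comp g x k i b l * w $ i * u $ b * v $ l) = 0" for k
  proof -
    have 2: "(\<Sum>i\<in>UNIV. \<Sum>b\<in>UNIV. \<Sum>l\<in>UNIV. riemann_comp g x k i b l * v $ i * w $ b * u $ l)
        = (\<Sum>p\<in>UNIV. \<Sum>q\<in>UNIV. \<Sum>r\<in>UNIV. riemann_comp g x k q r p * u $ p * v $ q * w $ r)"
      by (subst sum_rotate3) (simp add: mult.commute mult.left_commute)
    have 3: "(\<Sum>i\<in>UNIV. \<Sum>b\<in>UNIV. \<Sum>l\<in>UNIV. riemann_comp g x k i b l * w $ i * u $ b * v $ l)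
        = (\<Sum>p\<in>UNIV. \<Sum>q\<in>UNIV. \<Sum>r\<in>UNIV. riemann_comp g x k r p q * u $ p * v $ q * w $ r)"
      by (subst sum_rotate3, subst sum_rotate3) (simp add: mult.commute mult.left_commute)
    have "(\<Sum>p\<in>UNIV. \<Sum>q\<in>UNIV. \<Sum>r\<in>UNIV. (riemann_comp g x k p q r + riemann_comp g x k q r p
        + riemann_comp g x k r p q) * u $ p * v $ q * w $ r) = 0"
      by (simp add: riemann_comp_bianchi[OF x])
    then show ?thesis unfolding 2 3 by (simp add: sum.distrib[symmetric] algebra_simps)
  qed
  then show ?thesis unfolding riemann_def by (simp add: vec_eq_iff)
qed

lemma algebraic_curvature_riemann:
  assumes "x \<in> U"
  shows "algebraic_curvature (riemann g x)"
  unfolding algebraic_curvature_def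
  using linear_riemann_middle linear_riemann_right riemann_antisym riemann_bianchi[OF assms] by blast

end

definition cov_deriv_tf ::
  "(real^'n::finite \<Rightarrow> real^'n^'n) \<Rightarrow> (real^'n \<Rightarrow> real^'n^'n) \<Rightarrow> real^'n \<Rightarrow> real^'n \<Rightarrow> real^'n^'n" where
  "cov_deriv_tf g A x u =
    mat_dirD (\<lambda>_. u) A x + christoffel_matrix g x u ** A x - A x ** christoffel_matrix g x u"

lemma (in riemannian_domain) nabla_matrix_vector_mult:
  assumes "\<And>a b. smooth_fun U (\<lambda>y. A y $ a $ b)" "smooth_vf U Y" "x \<in> U"
  shows "nabla g X (\<lambda>y. A y *v Y y) x = A x *v nabla g X Y x + cov_deriv_tf g A x (X x) *v Y x"
proof -
  have "mat_dirD X A x = mat_dirD (\<lambda>_. X x) A x"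
    by (simp add: mat_dirD_def dirD_def)
  then show ?thesis
    unfolding nabla_eq_christoffel_matrix vdirD_eq_jacobian[symmetric] vdirD_matrix_vector_mult[OF assms]
      cov_deriv_tf_def
    by (simp add: vdirD_eq_jacobian matrix_vector_mul_assoc algebra_simps)
qed

section \<open>Contact metric structures\<close>

locale contact_metric_domain =
  fixes U :: "(real^'n::finite) set"
    and eta xi :: "real^'n \<Rightarrow> real^'n"
    and phi g :: "real^'n \<Rightarrow> real^'n^'n"
  assumes contact_metric: "contact_metric_structure U eta xi phi g"
begin

sublocale riemannian_domain U g
  using contact_metric unfolding contact_metric_structure_def by unfold_locales blast+

lemma smooth_vf_eta: "smooth_vf U eta"
  and smooth_vf_xi: "smooth_vf U xi"
  and smooth_phi: "smooth_tf U phi"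
  and eta_xi: "y \<in> U \<Longrightarrow> eta y \<bullet> xi y = 1"
  and deta_pt_xi: "y \<in> U \<Longrightarrow> deta_pt eta y (xi y) v = 0"
  and phi_phi: "y \<in> U \<Longrightarrow> phi y *v (phi y *v v) = - v + (eta y \<bullet> v) *\<^sub>R xi y"
  and phi_xi: "y \<in> U \<Longrightarrow> phi y *v xi y = 0"
  and gpt_phi_phi:
    "y \<in> U \<Longrightarrow> gpt g y (phi y *v u) (phi y *v v) = gpt g y u v - (eta y \<bullet> u) * (eta y \<bullet> v)"
  and deta_pt_eq_gpt: "y \<in> U \<Longrightarrow> deta_pt eta y u v = 2 * gpt g y u (phi y *v v)"
  using contact_metric unfolding contact_metric_structure_def by blast+

lemma smooth_vf_phi: "smooth_vf U X \<Longrightarrow> smooth_vf U (\<lambda>y. phi y *v X y)"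
  using smooth_phi unfolding smooth_tf_def by (intro smooth_vf_matrix_vector_mult) blast+

lemma gpt_xi_left: "y \<in> U \<Longrightarrow> gpt g y (xi y) v = eta y \<bullet> v"
  using gpt_phi_phi[of y "xi y" v] phi_xi[of y] eta_xi[of y] by simp

lemma gpt_xi_right: "y \<in> U \<Longrightarrow> gpt g y v (xi y) = eta y \<bullet> v"
  using gpt_xi_left gpt_commute by metis

lemma deta_pt_eq_jacobian:
  "y \<in> U \<Longrightarrow> deta_pt eta y u v = (jacobian eta y *v u) \<bullet> v - (jacobian eta y *v v) \<bullet> u"
  using dirD_inner[OF smooth_vf_eta smooth_vf_const, of y]
  by (simp add: deta_pt_def deta_def vdirD_eq_jacobian)

lemma gpt_phi_skew: "y \<in> U \<Longrightarrow> gpt g y u (phi y *v v) = - gpt g y (phi y *v u) v"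
  using deta_pt_eq_gpt[of y u v] deta_pt_eq_gpt[of y v u] gpt_commute[of y v "phi y *v u"]
  by (simp add: deta_pt_eq_jacobian)

lemma eta_phi: "y \<in> U \<Longrightarrow> eta y \<bullet> (phi y *v v) = 0"
  using gpt_xi_left[of y "phi y *v v"] gpt_phi_skew[of y "xi y" v] phi_xi[of y] by simp

lemma deta_eq_deta_pt:
  assumes "smooth_vf U X" "smooth_vf U Y" "x \<in> U"
  shows "deta eta X Y x = deta_pt eta x (X x) (Y x)"
  using dirD_inner[OF smooth_vf_eta assms(2,3)] dirD_inner[OF smooth_vf_eta assms(1,3)] assms(3)
  by (simp add: deta_def lie_def inner_diff_right vdirD_eq_jacobian deta_pt_eq_jacobian)

abbreviation eta_on :: "(real^'n \<Rightarrow> real^'n) \<Rightarrow> real^'n \<Rightarrow> real" where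
  "eta_on V \<equiv> \<lambda>y. eta y \<bullet> V y"

lemma lie_xi_eta:
  assumes "smooth_vf U V" "y \<in> U"
  shows "dirD xi (eta_on V) y = eta_on (lie xi V) y"
proof -
  have "dirD V (eta_on xi) y = dirD V (\<lambda>_. 1) y"
    using assms(2) by (intro dirD_cong) (simp_all add: eta_xi)
  then show ?thesis
    using deta_eq_deta_pt[OF smooth_vf_xi assms] deta_pt_xi[OF assms(2)] by (simp add: deta_def)
qed

lemma dirD_lie_xi_eta:
  assumes "smooth_vf U V" "x \<in> U"
  shows "dirD W (dirD xi (eta_on V)) x = dirD W (eta_on (lie xi V)) x"
  using assms(2) by (rule dirD_cong) (rule lie_xi_eta[OF assms(1)])

text \<open>L_xi d eta = 0, computed in coordinates from L_xi eta = 0 and the Jacobi identity.\<close>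

lemma lie_xi_deta:
  assumes X: "smooth_vf U X" and Y: "smooth_vf U Y" and x: "x \<in> U"
  shows "dirD xi (deta eta X Y) x = deta eta (lie xi X) Y x + deta eta X (lie xi Y) x"
proof -
  have XY: "smooth_vf U (lie X Y)"
    using X Y by (rule smooth_vf_lie)
  have "dirD xi (deta eta X Y) x
      = dirD xi (dirD X (eta_on Y)) x - dirD xi (dirD Y (eta_on X)) x - dirD xi (eta_on (lie X Y)) x"
    unfolding deta_def[abs_def]
    by (subst dirD_diff, (intro differentiable_diff smooth_imp_differentiable[OF _ x] smooth_dirD
          smooth_inner smooth_vf_eta X Y XY)+,
        subst dirD_diff, (intro smooth_imp_differentiable[OF _ x] smooth_dirD smooth_inner
          smooth_vf_eta X Y XY)+,
        simp)
  moreover have "dirD (lie xi X) (eta_on Y) x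
      = dirD xi (dirD X (eta_on Y)) x - dirD X (dirD xi (eta_on Y)) x"
    by (rule dirD_lie[OF smooth_vf_xi X smooth_inner[OF smooth_vf_eta Y] x])
  moreover have "dirD (lie xi Y) (eta_on X) x
      = dirD xi (dirD Y (eta_on X)) x - dirD Y (dirD xi (eta_on X)) x"
    by (rule dirD_lie[OF smooth_vf_xi Y smooth_inner[OF smooth_vf_eta X] x])
  moreover have "eta_on (lie (lie xi X) Y) x + eta_on (lie X (lie xi Y)) x
      = eta_on (lie xi (lie X Y)) x"
    using lie_jacobi[OF smooth_vf_xi X Y x] by (metis inner_add_right)
  ultimately show ?thesis
    using dirD_lie_xi_eta[OF X x, of Y] dirD_lie_xi_eta[OF Y x, of X] lie_xi_eta[OF XY x]
    by (simp add: deta_def)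
qed

definition lie_xi_metric :: "(real^'n \<Rightarrow> real^'n) \<Rightarrow> (real^'n \<Rightarrow> real^'n) \<Rightarrow> real^'n \<Rightarrow> real" where
  "lie_xi_metric X Z x = dirD xi (\<lambda>y. gpt g y (X y) (Z y)) x
    - gpt g x (lie xi X x) (Z x) - gpt g x (X x) (lie xi Z x)"

lemma lie_xi_metric_eq_nabla:
  assumes X: "smooth_vf U X" and Z: "smooth_vf U Z" and x: "x \<in> U"
  shows "lie_xi_metric X Z x = gpt g x (nabla g X xi x) (Z x) + gpt g x (X x) (nabla g Z xi x)"
  unfolding lie_xi_metric_def dirD_gpt[OF smooth_vf_xi X Z x]
    nabla_torsion_free[OF x, of xi X, symmetric] nabla_torsion_free[OF x, of xi Z, symmetric]
  by (simp add: gpt_linear)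

lemma lie_xi_metric_xi:
  assumes X: "smooth_vf U X" and x: "x \<in> U"
  shows "lie_xi_metric X xi x = 0"
proof -
  have "dirD xi (\<lambda>y. gpt g y (X y) (xi y)) x = dirD xi (eta_on X) x"
    using x by (rule dirD_cong) (simp add: gpt_xi_right)
  then show ?thesis
    using lie_xi_eta[OF X x] x by (simp add: lie_xi_metric_def lie_def gpt_xi_right)
qed

abbreviation nabla_phi :: "real^'n \<Rightarrow> real^'n \<Rightarrow> real^'n \<Rightarrow> real^'n" where
  "nabla_phi x u v \<equiv> cov_deriv_tf g phi x u *v v"

lemma nabla_phi_eq:
  "smooth_vf U Y \<Longrightarrow> x \<in> U \<Longrightarrow>
    nabla g X (\<lambda>y. phi y *v Y y) x = phi x *v nabla g X Y x + nabla_phi x (X x) (Y x)"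
  using smooth_phi unfolding smooth_tf_def by (intro nabla_matrix_vector_mult) blast+

lemma nabla_phi_skew:
  assumes x: "x \<in> U"
  shows "gpt g x (nabla_phi x u v) w + gpt g x v (nabla_phi x u w) = 0"
proof -
  let ?U = "\<lambda>_. u" and ?V = "\<lambda>_. v" and ?W = "\<lambda>_. w"
  have "dirD ?U (\<lambda>y. gpt g y (phi y *v v) w + gpt g y v (phi y *v w)) x = dirD ?U (\<lambda>_. 0) x"
    using x by (rule dirD_cong) (simp add: gpt_phi_skew)
  moreover have "dirD ?U (\<lambda>y. gpt g y (phi y *v v) w + gpt g y v (phi y *v w)) x
      = dirD ?U (\<lambda>y. gpt g y (phi y *v ?V y) (?W y)) x
        + dirD ?U (\<lambda>y. gpt g y (?V y) (phi y *v ?W y)) x"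
    by (intro dirD_add smooth_imp_differentiable[OF _ x] smooth_gpt smooth_vf_phi smooth_vf_const)
  ultimately have "0 = gpt g x (nabla g ?U (\<lambda>y. phi y *v ?V y) x) w
      + gpt g x (phi x *v v) (nabla g ?U ?W x)
      + (gpt g x (nabla g ?U ?V x) (phi x *v w) + gpt g x v (nabla g ?U (\<lambda>y. phi y *v ?W y) x))"
    using dirD_gpt[OF smooth_vf_const smooth_vf_phi[OF smooth_vf_const] smooth_vf_const x, of u v w]
      dirD_gpt[OF smooth_vf_const smooth_vf_const smooth_vf_phi[OF smooth_vf_const] x, of u v w]
    by simp
  then show ?thesis
    using gpt_phi_skew[OF x, of v "nabla g ?U ?W x"] gpt_phi_skew[OF x, of "nabla g ?U ?V x" w]
      gpt_commute[OF x, of "phi x *v v" "nabla g ?U ?W x"]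
      gpt_commute[OF x, of v "phi x *v nabla g ?U ?W x"]
    by (simp add: nabla_phi_eq[OF smooth_vf_const x] gpt_linear)
qed

lemma deta_pt_eq_nabla_xi:
  assumes x: "x \<in> U"
  shows "deta_pt eta x u z
    = gpt g x (cov_jacobian g xi x *v u) z - gpt g x (cov_jacobian g xi x *v z) u"
proof -
  have "dirD (\<lambda>_. a) (\<lambda>y. eta y \<bullet> b) x
      = gpt g x (cov_jacobian g xi x *v a) b + gpt g x (xi x) (christoffel_matrix g x a *v b)" for a b
  proof -
    have "dirD (\<lambda>_. a) (\<lambda>y. eta y \<bullet> b) x = dirD (\<lambda>_. a) (\<lambda>y. gpt g y (xi y) ((\<lambda>_. b) y)) x"
      using x by (rule dirD_cong) (simp add: gpt_xi_left)
    moreover have "nabla g (\<lambda>_. a) xi x = cov_jacobian g xi x *v a"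
      by (simp add: nabla_eq_cov_jacobian)
    moreover have "nabla g (\<lambda>_. a) (\<lambda>_. b) x = christoffel_matrix g x a *v b"
      by (simp add: nabla_eq_christoffel_matrix)
    ultimately show ?thesis
      using dirD_gpt[OF smooth_vf_const smooth_vf_xi smooth_vf_const x, of a b] by simp
  qed
  then show ?thesis
    using christoffel_matrix_sym[OF x, of u z] by (simp add: deta_pt_def deta_def)
qed

lemma weakly_semi_symmetric_riemann:
  assumes "weakly_semi_symmetric U eta xi phi g" "x \<in> U"
  shows "riemann g x a (xi x) (riemann g x b (xi x) (xi x))
    - riemann g x (riemann g x a (xi x) b) (xi x) (xi x)
    - riemann g x b (riemann g x a (xi x) (xi x)) (xi x)
    - riemann g x b (xi x) (riemann g x a (xi x) (xi x)) = 0"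
proof -
  let ?A = "\<lambda>_::real^'n. a" and ?B = "\<lambda>_::real^'n. b"
  have curv: "curv g X Y Z x = riemann g x (X x) (Y x) (Z x)"
    if "smooth_vf U X" "smooth_vf U Y" "smooth_vf U Z" for X Y Z
    using that assms(2) by (rule curv_eq_riemann)
  have "curv g ?A xi (curv g ?B xi xi) x - curv g (curv g ?A xi ?B) xi xi x
      - curv g ?B (curv g ?A xi xi) xi x - curv g ?B xi (curv g ?A xi xi) x = 0"
    using assms smooth_vf_const smooth_vf_xi unfolding weakly_semi_symmetric_def by blast
  then show ?thesis
    by (simp add: curv smooth_vf_curv smooth_vf_const smooth_vf_xi)
qed

end

locale K_contact_domain = contact_metric_domain +
  assumes K_contact: "K_contact U eta xi phi g"
begin

lemma lie_xi_phi:
  assumes "smooth_vf U Y" "x \<in> U"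
  shows "lie xi (\<lambda>y. phi y *v Y y) x = phi x *v lie xi Y x"
  using K_contact assms unfolding K_contact_def by simp

lemma lie_xi_metric_phi:
  assumes X: "smooth_vf U X" and Y: "smooth_vf U Y" and x: "x \<in> U"
  shows "lie_xi_metric X (\<lambda>y. phi y *v Y y) x = 0"
proof -
  have "dirD xi (deta eta X Y) x = dirD xi (\<lambda>y. 2 * gpt g y (X y) (phi y *v Y y)) x"
    using x by (rule dirD_cong) (simp add: deta_eq_deta_pt deta_pt_eq_gpt X Y)
  also have "\<dots> = 2 * dirD xi (\<lambda>y. gpt g y (X y) (phi y *v Y y)) x"
    by (intro dirD_cmult smooth_imp_differentiable[OF _ x] smooth_gpt X smooth_vf_phi Y)
  finally show ?thesis
    using lie_xi_deta[OF X Y x] lie_xi_phi[OF Y x] X Y x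
    by (simp add: lie_xi_metric_def deta_eq_deta_pt deta_pt_eq_gpt smooth_vf_lie smooth_vf_xi)
qed

text \<open>xi is a Killing field: L_xi g vanishes on xi and on the image of phi, which together span.\<close>

lemma xi_killing:
  assumes x: "x \<in> U"
  shows "gpt g x (cov_jacobian g xi x *v u) z + gpt g x u (cov_jacobian g xi x *v z) = 0"
proof -
  define K where "K z = gpt g x (cov_jacobian g xi x *v u) z + gpt g x u (cov_jacobian g xi x *v z)"
    for z
  have K_phi: "K (phi x *v w) = 0" for w
    using lie_xi_metric_phi[OF smooth_vf_const smooth_vf_const x, of u w]
      lie_xi_metric_eq_nabla[OF smooth_vf_const smooth_vf_phi[OF smooth_vf_const] x]
    by (simp add: K_def nabla_eq_cov_jacobian)
  have K_xi: "K (xi x) = 0"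
    using lie_xi_metric_xi[OF smooth_vf_const x, of u]
      lie_xi_metric_eq_nabla[OF smooth_vf_const smooth_vf_xi x]
    by (simp add: K_def nabla_eq_cov_jacobian)
  have "z = phi x *v (- (phi x *v z)) + (eta x \<bullet> z) *\<^sub>R xi x"
    using phi_phi[OF x, of z] by (simp add: matrix_vector_mult_minus_right)
  then have "K z = K (phi x *v (- (phi x *v z)) + (eta x \<bullet> z) *\<^sub>R xi x)"
    by (rule arg_cong)
  also have "\<dots> = K (phi x *v (- (phi x *v z))) + (eta x \<bullet> z) * K (xi x)"
    unfolding K_def by (simp add: gpt_linear algebra_simps)
  finally show ?thesis
    unfolding K_phi K_xi by (simp add: K_def)
qed

lemma cov_jacobian_xi: "x \<in> U \<Longrightarrow> cov_jacobian g xi x *v u = - (phi x *v u)"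
proof -
  assume x: "x \<in> U"
  let ?A = "cov_jacobian g xi x"
  have "gpt g x (?A *v u + phi x *v u) z = 0" for z
  proof -
    have "gpt g x (?A *v u) z + gpt g x (?A *v z) u = 0"
      using xi_killing[OF x, of u z] gpt_commute[OF x, of u] by simp
    moreover have "gpt g x (?A *v u) z - gpt g x (?A *v z) u = - 2 * gpt g x (phi x *v u) z"
      using deta_pt_eq_nabla_xi[OF x, of u z] deta_pt_eq_gpt[OF x, of u z] gpt_phi_skew[OF x, of u z]
      by simp
    ultimately show ?thesis
      by (simp add: gpt_linear)
  qed
  then have "?A *v u + phi x *v u = 0"
    using metric_nondegenerate[OF x] by blast
  then show ?thesis
    by (simp add: eq_neg_iff_add_eq_0)
qed

lemma nabla_xi: "x \<in> U \<Longrightarrow> nabla g X xi x = - (phi x *v X x)"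
  by (simp add: nabla_eq_cov_jacobian cov_jacobian_xi)

lemma nabla_nabla_xi:
  assumes "smooth_vf U X" "smooth_vf U Y" "x \<in> U"
  shows "nabla g X (nabla g Y xi) x = - (phi x *v nabla g X Y x + nabla_phi x (X x) (Y x))"
proof -
  have "nabla g X (nabla g Y xi) x = nabla g X (\<lambda>y. - (phi y *v Y y)) x"
    using assms(3) by (rule nabla_cong) (simp add: nabla_xi)
  then show ?thesis
    using nabla_minus[OF smooth_vf_phi[OF assms(2)] assms(3)] nabla_phi_eq[OF assms(2,3)] by simp
qed

lemma riemann_xi:
  assumes x: "x \<in> U"
  shows "riemann g x u v (xi x) = nabla_phi x v u - nabla_phi x u v"
proof -
  let ?U = "\<lambda>_. u" and ?V = "\<lambda>_. v"
  have "nabla g (lie ?U ?V) xi x = - (phi x *v (nabla g ?U ?V x - nabla g ?V ?U x))"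
    using nabla_xi[OF x] nabla_torsion_free[OF x] by simp
  then show ?thesis
    using curv_eq_riemann[OF smooth_vf_const smooth_vf_const smooth_vf_xi x, of u v]
      nabla_nabla_xi[OF smooth_vf_const smooth_vf_const x, of u v]
      nabla_nabla_xi[OF smooth_vf_const smooth_vf_const x, of v u]
    by (simp add: curv_def algebra_simps)
qed

lemma nabla_phi_xi_left:
  assumes x: "x \<in> U"
  shows "nabla_phi x (xi x) v = 0"
proof -
  let ?V = "\<lambda>_. v"
  have "nabla g xi (\<lambda>y. phi y *v ?V y) x
      = lie xi (\<lambda>y. phi y *v ?V y) x + nabla g (\<lambda>y. phi y *v ?V y) xi x"
    and "nabla g xi ?V x = lie xi ?V x + nabla g ?V xi x"
    using nabla_torsion_free[OF x, of xi] by (simp_all add: algebra_simps)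
  then show ?thesis
    using nabla_phi_eq[OF smooth_vf_const x, of xi v] lie_xi_phi[OF smooth_vf_const x, of v]
      nabla_xi[OF x]
    by (simp add: matrix_vector_mult_diff_distrib)
qed

lemma nabla_phi_xi_right:
  assumes x: "x \<in> U"
  shows "nabla_phi x u (xi x) = - u + (eta x \<bullet> u) *\<^sub>R xi x"
proof -
  have "nabla g (\<lambda>_. u) (\<lambda>y. phi y *v xi y) x = nabla g (\<lambda>_. u) (\<lambda>_. 0) x"
    using x by (rule nabla_cong) (simp add: phi_xi)
  then have "phi x *v nabla g (\<lambda>_. u) xi x + nabla_phi x u (xi x) = 0"
    using nabla_phi_eq[OF smooth_vf_xi x, of "\<lambda>_. u"] by simp
  then have "nabla_phi x u (xi x) = - (phi x *v nabla g (\<lambda>_. u) xi x)"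
    by (simp add: add_eq_0_iff)
  then show ?thesis
    using phi_phi[OF x, of u] by (simp add: nabla_xi[OF x] matrix_vector_mult_minus_right)
qed

lemma eta_nabla_phi:
  assumes x: "x \<in> U"
  shows "eta x \<bullet> nabla_phi x u v = gpt g x u v - (eta x \<bullet> u) * (eta x \<bullet> v)"
proof -
  let ?U = "\<lambda>_. u" and ?V = "\<lambda>_. v"
  have "dirD ?U (\<lambda>y. gpt g y (xi y) (phi y *v ?V y)) x = dirD ?U (\<lambda>_. 0) x"
    using x by (rule dirD_cong) (simp add: gpt_xi_left eta_phi)
  then have "gpt g x (xi x) (nabla g ?U (\<lambda>y. phi y *v ?V y) x)
      = - gpt g x (nabla g ?U xi x) (phi x *v v)"
    using dirD_gpt[OF smooth_vf_const smooth_vf_xi smooth_vf_phi[OF smooth_vf_const] x] by simp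
  also have "\<dots> = gpt g x u v - (eta x \<bullet> u) * (eta x \<bullet> v)"
    using gpt_phi_phi[OF x] by (simp add: nabla_xi[OF x] gpt_linear)
  finally show ?thesis
    using nabla_phi_eq[OF smooth_vf_const x, of ?U v] gpt_xi_left[OF x] eta_phi[OF x]
    by (simp add: inner_add_right)
qed

lemma nabla_phi_alternation:
  assumes semisym: "weakly_semi_symmetric U eta xi phi g" and x: "x \<in> U"
  shows "nabla_phi x u v - nabla_phi x v u = (eta x \<bullet> u) *\<^sub>R v - (eta x \<bullet> v) *\<^sub>R u"
proof -
  interpret algebraic_curvature "riemann g x"
    using x by (rule algebraic_curvature_riemann)
  have "riemann g x v u (xi x) = (eta x \<bullet> u) *\<^sub>R v - (eta x \<bullet> v) *\<^sub>R u"
  proof (rule R_xi_if_weakly_semisymmetric[OF _ _ _ weakly_semi_symmetric_riemann[OF semisym x]])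
    show "linear (\<lambda>a. eta x \<bullet> a)"
      by (rule bounded_linear.linear[OF bounded_linear_inner_right])
    show "riemann g x a (xi x) (xi x) = a - (eta x \<bullet> a) *\<^sub>R xi x" for a
      using riemann_xi[OF x] nabla_phi_xi_left[OF x] nabla_phi_xi_right[OF x] by simp
    show "eta x \<bullet> riemann g x a b (xi x) = 0" for a b
      using riemann_xi[OF x] eta_nabla_phi[OF x] gpt_commute[OF x] by (simp add: inner_diff_right)
  qed
  then show ?thesis
    using riemann_xi[OF x] by simp
qed

lemma nabla_phi_sasakian:
  assumes "weakly_semi_symmetric U eta xi phi g" and x: "x \<in> U"
  shows "nabla_phi x u v = gpt g x u v *\<^sub>R xi x - (eta x \<bullet> v) *\<^sub>R u"
proof (rule skew_eq_if_alternation)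
  show "nabla_phi x u v - nabla_phi x v u = (eta x \<bullet> u) *\<^sub>R v - (eta x \<bullet> v) *\<^sub>R u" for u v
    using assms by (rule nabla_phi_alternation)
  show "linear (\<lambda>a. gpt g x a b)" for b
    by (rule linearI) (simp_all add: gpt_linear)
  show "gpt g x (nabla_phi x u v) w + gpt g x v (nabla_phi x u w) = 0" for u v w
    using x by (rule nabla_phi_skew)
  show "gpt g x a b = gpt g x b a" for a b
    using x by (rule gpt_commute)
  show "(\<And>w. gpt g x a w = 0) \<Longrightarrow> a = 0" for a
    using x by (rule metric_nondegenerate)
  show "gpt g x (xi x) w = eta x \<bullet> w" for w
    using x by (rule gpt_xi_left)
qed

end

theorem corollary1:
  fixes U :: "(real^'n::finite) set"
    and eta xi :: "real^'n \<Rightarrow> real^'n"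
    and phi g :: "real^'n \<Rightarrow> real^'n^'n"
  assumes "contact_metric_structure U eta xi phi g"
    and "K_contact U eta xi phi g"
    and "weakly_semi_symmetric U eta xi phi g"
  shows "Sasakian U eta xi phi g"
proof -
  interpret K_contact_domain U eta xi phi g
    using assms(1,2) by unfold_locales
  show ?thesis
    unfolding Sasakian_def
    using nabla_phi_eq nabla_phi_sasakian[OF assms(3)] by simp
qed

end
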